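(* Let $\mathcal{S}$, $\mathcal{V}$, $\mathcal{Y}$ be standard Borel spaces, let $\mathcal{G}$ be a compact group acting measurably on $\mathcal{S}\times\mathcal{V}$, let $\mathcal{M}$ be a Borel space, and let $(S,V,Y)$ be random elements of $\mathcal{S}\times\mathcal{V}\times\mathcal{Y}$ such that the conditional distribution $P(Y\mid S,V)$ is $\mathcal{G}$-invariant. Then any invariant sufficient representation $M:\mathcal{S}\times\mathcal{V}\to\mathcal{M}$ under $\mathcal{G}$ is an adequate statistic of $(S,V)$ for $Y$.
   Context: A map $M:\mathcal{S}\times\mathcal{V}\to\mathcal{M}$ is an invariant sufficient representation under $\mathcal{G}$ if for all $(s_1,v_1),(s_2,v_2)$: $M(s_1,v_1)=M(s_2,v_2)$ if and only if $(s_2,v_2)=g\cdot(s_1,v_1)$ for some $g\in\mathcal{G}$. $P(Y\mid S,V)$ is $\mathcal{G}$-invariant if $P(Y\in\cdot\mid (S,V)=(s,v))=P(Y\in\cdot\mid (S,V)=g\cdot(s,v))$ for all $g\in\mathcal{G}$ and all $(s,v)$. A measurable map $M$ is a sufficient statistic for $P(S,V)$ if there is a Markov kernel $k$ from $\mathcal{M}$ to $\mathcal{S}\times\mathcal{V}$ such that $P((S,V)\in\cdot\mid M(S,V)=m)=k(\cdot,m)$ for all $m\in\mathcal{M}$. $M$ is an adequate statistic of $(S,V)$ for $Y$ if it is sufficient for $P(S,V)$ and, for all $s,v$, $P(Y\in\cdot\mid S=s,V=v)=P(Y\in\cdot\mid M(S,V)=M(s,v))$, i.e. $Y$ is conditionally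 independent of $(S,V)$ given $M(S,V)$. *)

theory Defs
  imports "HOL-Probability.Probability" "HOL-Algebra.Group_Action"
begin

definition borel_of :: "'a topology \<Rightarrow> 'a measure" where
  "borel_of T = sigma (topspace T) {U. openin T U}"

definition Polish_space :: "'a topology \<Rightarrow> bool" where
  "Polish_space T \<longleftrightarrow> completely_metrizable_space T \<and> separable_space T"

definition standard_borel :: "'a measure \<Rightarrow> bool" where
  "standard_borel M \<longleftrightarrow>
     (\<exists>T. Polish_space T \<and> topspace T = space M \<and> sets M = sets (borel_of T))"

definition compact_topological_group :: "('g, 'b) monoid_scheme \<Rightarrow> 'g topology \<Rightarrow> bool" where
  "compact_topological_group G T \<longleftrightarrow>
     group G \<and> topspace T = carrier G \<and> compact_space T \<and> Hausdorff_space T \<and>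
     continuous_map (prod_topology T T) T (\<lambda>(g, h). g \<otimes>\<^bsub>G\<^esub> h) \<and>
     continuous_map T T (\<lambda>g. inv\<^bsub>G\<^esub> g)"

definition measurable_group_action ::
  "('g, 'b) monoid_scheme \<Rightarrow> 'g topology \<Rightarrow> 'x measure \<Rightarrow> ('g \<Rightarrow> 'x \<Rightarrow> 'x) \<Rightarrow> bool" where
  "measurable_group_action G T X \<phi> \<longleftrightarrow>
     group_action G (space X) \<phi> \<and>
     (\<lambda>(g, x). \<phi> g x) \<in> measurable (borel_of T \<Otimes>\<^sub>M X) X"

definition cond_distr ::
  "'a measure \<Rightarrow> 'x measure \<Rightarrow> 'y measure \<Rightarrow> ('a \<Rightarrow> 'x) \<Rightarrow> ('a \<Rightarrow> 'y) \<Rightarrow> ('x \<Rightarrow> 'y measure) \<Rightarrow> bool" where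
  "cond_distr P MX MY X Y \<kappa> \<longleftrightarrow>
     \<kappa> \<in> measurable MX (prob_algebra MY) \<and>
     (\<forall>A\<in>sets MX. \<forall>B\<in>sets MY.
        emeasure P {\<omega> \<in> space P. X \<omega> \<in> A \<and> Y \<omega> \<in> B}
          = (\<integral>\<^sup>+ x. indicator A x * emeasure (\<kappa> x) B \<partial>distr P MX X))"

definition G_invariant_kernel ::
  "('g, 'b) monoid_scheme \<Rightarrow> 'x measure \<Rightarrow> ('g \<Rightarrow> 'x \<Rightarrow> 'x) \<Rightarrow> ('x \<Rightarrow> 'y measure) \<Rightarrow> bool" where
  "G_invariant_kernel G X \<phi> \<kappa> \<longleftrightarrow>
     (\<forall>g\<in>carrier G. \<forall>x\<in>space X. \<kappa> x = \<kappa> (\<phi> g x))"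

text \<open>Invariant sufficient representation (maximal invariant): M(x1) = M(x2) iff x2 = g.x1.\<close>
definition invariant_sufficient_rep ::
  "('g, 'b) monoid_scheme \<Rightarrow> 'x measure \<Rightarrow> 'm measure \<Rightarrow> ('g \<Rightarrow> 'x \<Rightarrow> 'x) \<Rightarrow> ('x \<Rightarrow> 'm) \<Rightarrow> bool" where
  "invariant_sufficient_rep G X MM \<phi> M \<longleftrightarrow>
     M \<in> measurable X MM \<and>
     (\<forall>x1\<in>space X. \<forall>x2\<in>space X. M x1 = M x2 \<longleftrightarrow> (\<exists>g\<in>carrier G. x2 = \<phi> g x1))"

text \<open>M is a sufficient statistic for the distribution of the random element Z
  (values in X): there is a Markov kernel k from MM to X which is a version of
  P(Z \<in> . | M(Z) = m).\<close>
definition sufficient_statistic ::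
  "'a measure \<Rightarrow> 'x measure \<Rightarrow> 'm measure \<Rightarrow> ('a \<Rightarrow> 'x) \<Rightarrow> ('x \<Rightarrow> 'm) \<Rightarrow> bool" where
  "sufficient_statistic P X MM Z M \<longleftrightarrow>
     M \<in> measurable X MM \<and> (\<exists>k. cond_distr P MM X (\<lambda>\<omega>. M (Z \<omega>)) Z k)"

text \<open>M is an adequate statistic of Z for Y, relative to the version kappa of P(Y | Z):
  sufficient, and kappa(z) = P(Y \<in> . | M(Z) = M(z)) for every z, i.e. there is a
  version q of P(Y | M(Z)) with kappa z = q (M z) for all z.\<close>
definition adequate_statistic ::
  "'a measure \<Rightarrow> 'x measure \<Rightarrow> 'y measure \<Rightarrow> 'm measure \<Rightarrow> ('a \<Rightarrow> 'x) \<Rightarrow> ('a \<Rightarrow> 'y)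
     \<Rightarrow> ('x \<Rightarrow> 'y measure) \<Rightarrow> ('x \<Rightarrow> 'm) \<Rightarrow> bool" where
  "adequate_statistic P X MY MM Z Y \<kappa> M \<longleftrightarrow>
     sufficient_statistic P X MM Z M \<and>
     (\<exists>q. cond_distr P MM MY (\<lambda>\<omega>. M (Z \<omega>)) Y q \<and> (\<forall>z\<in>space X. \<kappa> z = q (M z)))"

end

theory Submission
  imports Defs
begin

text \<open>The orbits of the group are exactly the fibres of \<open>M\<close> and the kernel \<open>\<kappa>\<close> is constant on
  orbits, hence on the fibres of \<open>M\<close>. On standard Borel spaces this forces \<open>\<kappa>\<close> to factor
  measurably through \<open>M\<close>: every nonempty standard Borel space is a measurable retract of \<open>\<real>\<close>,
  and by Lusin's separation theorem a measurable union of fibres of \<open>M\<close> is the preimage of a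
  measurable set. Applied to the distribution functions of \<open>\<kappa>\<close> at the rationals this gives a
  kernel \<open>q\<close> with \<open>\<kappa> = q \<circ> M\<close>, which is then a version of \<open>P(Y | M(S,V))\<close>. Sufficiency of
  \<open>M\<close> is the existence of a regular conditional distribution of \<open>(S,V)\<close> given \<open>M(S,V)\<close>, built
  on \<open>\<real>\<close> from Radon-Nikodym derivatives of \<open>P(T \<le> c, W \<in> _)\<close> at rational \<open>c\<close>.\<close>

section \<open>Analytic sets and Lusin's separation theorem\<close>

text \<open>Closed sets and continuous maps on the Baire space \<open>nat \<Rightarrow> nat\<close> are expressed through
  agreement on initial segments, the topology of the Baire metric.\<close>

definition agree_upto :: "nat \<Rightarrow> (nat \<Rightarrow> nat) \<Rightarrow> (nat \<Rightarrow> nat) \<Rightarrow> bool" where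
  "agree_upto n a b \<longleftrightarrow> (\<forall>i<n. a i = b i)"

definition baire_closed :: "(nat \<Rightarrow> nat) set \<Rightarrow> bool" where
  "baire_closed F \<longleftrightarrow> (\<forall>a. (\<forall>n. \<exists>b\<in>F. agree_upto n a b) \<longrightarrow> a \<in> F)"

definition baire_continuous_on :: "(nat \<Rightarrow> nat) set \<Rightarrow> ((nat \<Rightarrow> nat) \<Rightarrow> 'a::metric_space) \<Rightarrow> bool" where
  "baire_continuous_on F f \<longleftrightarrow>
     (\<forall>a\<in>F. \<forall>e>0. \<exists>n. \<forall>b\<in>F. agree_upto n a b \<longrightarrow> dist (f b) (f a) < e)"

definition analytic_set :: "'a::metric_space set \<Rightarrow> bool" where
  "analytic_set A \<longleftrightarrow> (\<exists>F f. baire_closed F \<and> baire_continuous_on F f \<and> A = f ` F)"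

lemma agree_upto_commute: "agree_upto n a b = agree_upto n b a"
  unfolding agree_upto_def by auto

lemma agree_upto_mono: "agree_upto n a b \<Longrightarrow> m \<le> n \<Longrightarrow> agree_upto m a b"
  unfolding agree_upto_def by auto

lemma analytic_set_empty: "analytic_set {}"
  unfolding analytic_set_def baire_closed_def baire_continuous_on_def by (rule exI[of _ "{}"]) auto

lemma analytic_set_continuous_image:
  assumes "analytic_set A" "continuous_on A g"
  shows "analytic_set (g ` A)"
proof -
  obtain F f where F: "baire_closed F" "baire_continuous_on F f" "A = f ` F"
    using assms(1) unfolding analytic_set_def by blast
  have "baire_continuous_on F (g \<circ> f)"
    unfolding baire_continuous_on_def
  proof (intro ballI allI impI)
    fix a e assume a: "a \<in> F" and e: "(e::real) > 0"
    have "f a \<in> A" using a F(3) by auto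
    then obtain d where d: "d > 0" "\<And>y. y \<in> A \<Longrightarrow> dist y (f a) < d \<Longrightarrow> dist (g y) (g (f a)) < e"
      using assms(2) e unfolding continuous_on_iff by metis
    obtain n where n: "\<And>b. b \<in> F \<Longrightarrow> agree_upto n a b \<Longrightarrow> dist (f b) (f a) < d"
      using F(2) a d(1) unfolding baire_continuous_on_def by metis
    show "\<exists>n. \<forall>b\<in>F. agree_upto n a b \<longrightarrow> dist ((g \<circ> f) b) ((g \<circ> f) a) < e"
      using n d(2) F(3) by (intro exI[of _ n]) auto
  qed
  then show ?thesis
    using F unfolding analytic_set_def by (intro exI[of _ F] exI[of _ "g \<circ> f"]) (auto simp: image_comp)
qed

lemma baire_closed_tagged_union:
  assumes "\<And>i. baire_closed (F i)"
  shows "baire_closed {a. (\<lambda>k. a (Suc k)) \<in> F (a 0)}"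
  unfolding baire_closed_def
proof (intro allI impI CollectI)
  fix a assume approx: "\<forall>n. \<exists>b\<in>{a. (\<lambda>k. a (Suc k)) \<in> F (a 0)}. agree_upto n a b"
  have "\<exists>b\<in>F (a 0). agree_upto n (\<lambda>k. a (Suc k)) b" for n
  proof -
    obtain b where "(\<lambda>k. b (Suc k)) \<in> F (b 0)" "agree_upto (Suc n) a b" using approx by blast
    then show ?thesis unfolding agree_upto_def by (intro bexI[of _ "\<lambda>k. b (Suc k)"]) auto
  qed
  then show "(\<lambda>k. a (Suc k)) \<in> F (a 0)" using assms[of "a 0"] unfolding baire_closed_def by blast
qed

lemma baire_continuous_on_tagged_union:
  assumes "\<And>i. baire_continuous_on (F i) (f i)"
  shows "baire_continuous_on {a. (\<lambda>k. a (Suc k)) \<in> F (a 0)} (\<lambda>a. f (a 0) (\<lambda>k. a (Suc k)))"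
  unfolding baire_continuous_on_def
proof (intro ballI allI impI)
  fix a e assume a: "a \<in> {a. (\<lambda>k. a (Suc k)) \<in> F (a 0)}" and e: "(e::real) > 0"
  then obtain n where n: "\<And>b. b \<in> F (a 0) \<Longrightarrow> agree_upto n (\<lambda>k. a (Suc k)) b \<Longrightarrow>
      dist (f (a 0) b) (f (a 0) (\<lambda>k. a (Suc k))) < e"
    using assms[of "a 0"] unfolding baire_continuous_on_def by blast
  show "\<exists>n. \<forall>b\<in>{a. (\<lambda>k. a (Suc k)) \<in> F (a 0)}. agree_upto n a b \<longrightarrow>
      dist (f (b 0) (\<lambda>k. b (Suc k))) (f (a 0) (\<lambda>k. a (Suc k))) < e"
  proof (intro exI[of _ "Suc n"] ballI impI)
    fix b assume b: "b \<in> {a. (\<lambda>k. a (Suc k)) \<in> F (a 0)}" "agree_upto (Suc n) a b"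
    then have "b 0 = a 0" "agree_upto n (\<lambda>k. a (Suc k)) (\<lambda>k. b (Suc k))"
      unfolding agree_upto_def by auto
    then show "dist (f (b 0) (\<lambda>k. b (Suc k))) (f (a 0) (\<lambda>k. a (Suc k))) < e" using n b(1) by auto
  qed
qed

lemma analytic_set_UN:
  fixes A :: "nat \<Rightarrow> 'a::metric_space set"
  assumes "\<And>i. analytic_set (A i)"
  shows "analytic_set (\<Union>i. A i)"
proof -
  obtain F f where F: "\<And>i. baire_closed (F i)" "\<And>i. baire_continuous_on (F i) (f i :: _ \<Rightarrow> 'a)"
      "\<And>i. A i = f i ` F i"
    using assms unfolding analytic_set_def by metis
  have "(\<Union>i. A i) = (\<lambda>a. f (a 0) (\<lambda>k. a (Suc k))) ` {a. (\<lambda>k. a (Suc k)) \<in> F (a 0)}"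
  proof (intro equalityI subsetI)
    fix x assume "x \<in> (\<Union>i. A i)"
    then obtain i c where c: "c \<in> F i" "x = f i c" using F(3) by auto
    define a where "a k = (case k of 0 \<Rightarrow> i | Suc k \<Rightarrow> c k)" for k
    have "a 0 = i" "(\<lambda>k. a (Suc k)) = c" by (simp_all add: a_def)
    then show "x \<in> (\<lambda>a. f (a 0) (\<lambda>k. a (Suc k))) ` {a. (\<lambda>k. a (Suc k)) \<in> F (a 0)}"
      using c by (intro image_eqI[of _ _ a]) simp_all
  next
    fix x assume "x \<in> (\<lambda>a. f (a 0) (\<lambda>k. a (Suc k))) ` {a. (\<lambda>k. a (Suc k)) \<in> F (a 0)}"
    then show "x \<in> (\<Union>i. A i)" by (auto simp: F(3))
  qed
  then show ?thesis
    unfolding analytic_set_def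
    using baire_closed_tagged_union[OF F(1)] baire_continuous_on_tagged_union[OF F(2)]
    by (intro exI conjI)
qed

text \<open>For intersections, a sequence interleaves via \<^const>\<open>prod_encode\<close> one point of every
  component, all of them mapped to the same point.\<close>

definition baire_component :: "nat \<Rightarrow> (nat \<Rightarrow> nat) \<Rightarrow> (nat \<Rightarrow> nat)" where
  "baire_component n a = (\<lambda>k. a (prod_encode (n, k)))"

lemma prod_encode_strict_mono2: "k < l \<Longrightarrow> prod_encode (n, k) < prod_encode (n, l)"
proof -
  assume "k < l"
  then have "triangle (Suc (n + k)) \<le> triangle (n + l)"
    unfolding triangle_def by (intro div_le_mono mult_le_mono) auto
  then show ?thesis unfolding prod_encode_def by simp
qed

lemma agree_upto_baire_component:
  "agree_upto (prod_encode (n, l)) a b \<Longrightarrow> agree_upto l (baire_component n a) (baire_component n b)"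
  unfolding agree_upto_def baire_component_def using prod_encode_strict_mono2 by auto

lemma baire_closed_coherent_product:
  fixes f :: "nat \<Rightarrow> (nat \<Rightarrow> nat) \<Rightarrow> 'a::metric_space"
  assumes F: "\<And>i. baire_closed (F i)" and f: "\<And>i. baire_continuous_on (F i) (f i)"
  shows "baire_closed
    {a. \<forall>n. baire_component n a \<in> F n \<and> f n (baire_component n a) = f 0 (baire_component 0 a)}"
    (is "baire_closed ?F")
  unfolding baire_closed_def
proof (intro allI impI)
  fix a assume approx: "\<forall>n. \<exists>b\<in>?F. agree_upto n a b"
  let ?c = "\<lambda>n. baire_component n a"
  have c: "?c n \<in> F n" for n
  proof -
    have "\<exists>b\<in>F n. agree_upto l (?c n) b" for l
    proof -
      obtain b where "b \<in> ?F" "agree_upto (prod_encode (n, l)) a b" using approx by blast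
      then show ?thesis using agree_upto_baire_component[of n l a b] by auto
    qed
    then show ?thesis using F[of n] unfolding baire_closed_def by auto
  qed
  have "f n (?c n) = f 0 (?c 0)" for n
  proof (rule ccontr)
    assume ne: "f n (?c n) \<noteq> f 0 (?c 0)"
    define e where "e = dist (f n (?c n)) (f 0 (?c 0)) / 2"
    have e: "e > 0" using ne by (simp add: e_def)
    obtain l1 where l1: "\<And>b. b \<in> F n \<Longrightarrow> agree_upto l1 (?c n) b \<Longrightarrow> dist (f n b) (f n (?c n)) < e"
      using f[of n] c[of n] e unfolding baire_continuous_on_def by metis
    obtain l0 where l0: "\<And>b. b \<in> F 0 \<Longrightarrow> agree_upto l0 (?c 0) b \<Longrightarrow> dist (f 0 b) (f 0 (?c 0)) < e"
      using f[of 0] c[of 0] e unfolding baire_continuous_on_def by metis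
    obtain b where b: "b \<in> ?F" "agree_upto (max (prod_encode (n, l1)) (prod_encode (0, l0))) a b"
      using approx by blast
    have "agree_upto l1 (?c n) (baire_component n b)" "agree_upto l0 (?c 0) (baire_component 0 b)"
      using agree_upto_baire_component agree_upto_mono[OF b(2)] by auto
    then have "dist (f n (baire_component n b)) (f n (?c n)) < e"
        "dist (f 0 (baire_component 0 b)) (f 0 (?c 0)) < e"
      using l1 l0 b(1) by auto
    moreover have "f n (baire_component n b) = f 0 (baire_component 0 b)" using b(1) by auto
    ultimately have "dist (f n (?c n)) (f 0 (?c 0)) < 2 * e"
      using dist_triangle[of "f n (?c n)" "f 0 (?c 0)" "f n (baire_component n b)"]
      by (simp add: dist_commute)
    then show False by (simp add: e_def)
  qed
  then show "a \<in> ?F" using c by auto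
qed

lemma baire_continuous_on_subset:
  "baire_continuous_on F f \<Longrightarrow> G \<subseteq> F \<Longrightarrow> baire_continuous_on G f"
  unfolding baire_continuous_on_def by blast

lemma baire_continuous_on_component:
  assumes "baire_continuous_on F f"
  shows "baire_continuous_on {a. baire_component n a \<in> F} (\<lambda>a. f (baire_component n a))"
  unfolding baire_continuous_on_def
proof (intro ballI allI impI)
  fix a e assume "a \<in> {a. baire_component n a \<in> F}" and e: "(e::real) > 0"
  then obtain l where l: "\<And>b. b \<in> F \<Longrightarrow> agree_upto l (baire_component n a) b \<Longrightarrow>
      dist (f b) (f (baire_component n a)) < e"
    using assms unfolding baire_continuous_on_def by blast
  show "\<exists>l. \<forall>b\<in>{a. baire_component n a \<in> F}. agree_upto l a b \<longrightarrow>
      dist (f (baire_component n b)) (f (baire_component n a)) < e"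
    using l agree_upto_baire_component by (intro exI[of _ "prod_encode (n, l)"]) blast
qed

lemma analytic_set_INT:
  fixes A :: "nat \<Rightarrow> 'a::metric_space set"
  assumes "\<And>i. analytic_set (A i)"
  shows "analytic_set (\<Inter>i. A i)"
proof -
  obtain F f where F: "\<And>i. baire_closed (F i)" "\<And>i. baire_continuous_on (F i) (f i :: _ \<Rightarrow> 'a)"
      "\<And>i. A i = f i ` F i"
    using assms unfolding analytic_set_def by metis
  define G where "G = {a. \<forall>n. baire_component n a \<in> F n \<and>
      f n (baire_component n a) = f 0 (baire_component 0 a)}"
  define g where "g a = f 0 (baire_component 0 a)" for a
  have "baire_continuous_on G g"
    unfolding g_def using baire_continuous_on_component[OF F(2)[of 0]]
    by (rule baire_continuous_on_subset) (auto simp: G_def)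
  moreover have "(\<Inter>i. A i) = g ` G"
  proof (intro equalityI subsetI)
    fix x assume "x \<in> (\<Inter>i. A i)"
    then have "\<forall>i. \<exists>c. c \<in> F i \<and> x = f i c" unfolding F(3) by blast
    then obtain c where c: "\<And>i. c i \<in> F i" "\<And>i. x = f i (c i)" by metis
    define a where "a m = c (fst (prod_decode m)) (snd (prod_decode m))" for m
    have components: "baire_component n a = c n" for n by (simp add: baire_component_def a_def)
    have "a \<in> G" using c by (simp add: G_def components)
    moreover have "x = g a" using c(2) by (simp add: g_def components)
    ultimately show "x \<in> g ` G" by blast
  next
    fix x assume "x \<in> g ` G"
    then obtain a where a: "a \<in> G" and x: "x = f 0 (baire_component 0 a)" unfolding g_def by blast
    have "x \<in> f i ` F i" for i
    proof (rule image_eqI)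
      have "baire_component i a \<in> F i \<and> f i (baire_component i a) = f 0 (baire_component 0 a)"
        using a unfolding G_def by blast
      then show "x = f i (baire_component i a)" "baire_component i a \<in> F i" using x by simp_all
    qed
    then show "x \<in> (\<Inter>i. A i)" unfolding F(3) by blast
  qed
  ultimately show ?thesis
    unfolding analytic_set_def G_def
    using baire_closed_coherent_product[OF F(1,2)] by (intro exI conjI)
qed

subsection \<open>Borel sets of Polish spaces are analytic\<close>

lemma dist_le_geometric:
  fixes x :: "nat \<Rightarrow> 'a::metric_space"
  assumes step: "\<And>n. dist (x n) (x (Suc n)) \<le> (1/2)^n" and "n \<le> m"
  shows "dist (x n) (x m) \<le> 2 * (1/2)^n"
proof -
  obtain k where m: "m = n + k" using \<open>n \<le> m\<close> le_Suc_ex by blast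
  have "dist (x n) (x (n + k)) \<le> 2 * (1/2)^n - 2 * (1/2)^(n + k)"
  proof (induction k)
    case (Suc k)
    have "dist (x n) (x (n + Suc k)) \<le> dist (x n) (x (n + k)) + dist (x (n + k)) (x (Suc (n + k)))"
      using dist_triangle by simp
    also have "\<dots> \<le> 2 * (1/2)^n - 2 * (1/2)^(n + Suc k)" using Suc step[of "n + k"] by simp
    finally show ?case .
  qed simp
  moreover have "0 \<le> (1/2::real)^(n + k)" by simp
  ultimately show ?thesis unfolding m by linarith
qed

lemma convergent_geometric_steps:
  fixes x :: "nat \<Rightarrow> 'a::complete_space"
  assumes step: "\<And>n. dist (x n) (x (Suc n)) \<le> (1/2)^n"
  shows "x \<longlonglongrightarrow> lim x" and "dist (x n) (lim x) \<le> 2 * (1/2)^n"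
proof -
  have "Cauchy x"
    unfolding Cauchy_def
  proof (intro allI impI)
    fix e :: real assume e: "e > 0"
    obtain N where N: "(1/2::real)^N < e/4" using real_arch_pow_inv[of "e/4" "1/2"] e by auto
    show "\<exists>N. \<forall>m\<ge>N. \<forall>n\<ge>N. dist (x m) (x n) < e"
    proof (intro exI[of _ N] allI impI)
      fix m n assume "N \<le> m" "N \<le> n"
      then have "dist (x N) (x m) \<le> 2 * (1/2)^N" "dist (x N) (x n) \<le> 2 * (1/2)^N"
        using dist_le_geometric[OF step] by auto
      then show "dist (x m) (x n) < e"
        using N dist_triangle[of "x m" "x n" "x N"] by (simp add: dist_commute)
    qed
  qed
  then show lim: "x \<longlonglongrightarrow> lim x" by (simp add: Cauchy_convergent_iff convergent_LIMSEQ_iff)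
  show "dist (x n) (lim x) \<le> 2 * (1/2)^n"
  proof (rule LIMSEQ_le_const2)
    show "(\<lambda>m. dist (x n) (x m)) \<longlonglongrightarrow> dist (x n) (lim x)" by (intro tendsto_intros lim)
    show "\<exists>N. \<forall>m\<ge>N. dist (x n) (x m) \<le> 2 * (1/2)^n" using dist_le_geometric[OF step] by auto
  qed
qed

lemma baire_closed_consecutive: "baire_closed {\<alpha>. \<forall>n. R n (\<alpha> n) (\<alpha> (Suc n))}"
  unfolding baire_closed_def
proof (intro allI impI CollectI)
  fix \<alpha> n assume "\<forall>n. \<exists>b\<in>{\<alpha>. \<forall>n. R n (\<alpha> n) (\<alpha> (Suc n))}. agree_upto n \<alpha> b"
  then obtain b where "\<forall>n. R n (b n) (b (Suc n))" "agree_upto (Suc (Suc n)) \<alpha> b" by blast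
  moreover from this(2) have "\<alpha> n = b n" "\<alpha> (Suc n) = b (Suc n)" by (simp_all add: agree_upto_def)
  ultimately show "R n (\<alpha> n) (\<alpha> (Suc n))" by simp
qed

text \<open>A closed set is parametrised by the index sequences \<open>\<alpha>\<close> for which \<open>a \<circ> \<alpha>\<close> converges
  geometrically fast, where \<open>a\<close> is a dense sequence in the set.\<close>

definition fast_index_seqs :: "(nat \<Rightarrow> 'a::metric_space) \<Rightarrow> (nat \<Rightarrow> nat) set" where
  "fast_index_seqs a = {\<alpha>. \<forall>n. dist (a (\<alpha> n)) (a (\<alpha> (Suc n))) \<le> (1/2)^n}"

lemma baire_continuous_on_lim_fast_index_seqs:
  fixes a :: "nat \<Rightarrow> 'a::complete_space"
  shows "baire_continuous_on (fast_index_seqs a) (\<lambda>\<alpha>. lim (\<lambda>n. a (\<alpha> n)))"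
  unfolding baire_continuous_on_def
proof (intro ballI allI impI)
  fix \<alpha> e assume \<alpha>: "\<alpha> \<in> fast_index_seqs a" and e: "(e::real) > 0"
  obtain N where N: "(1/2::real)^N < e/4" using real_arch_pow_inv[of "e/4" "1/2"] e by auto
  have close: "dist (a (\<beta> N)) (lim (\<lambda>n. a (\<beta> n))) \<le> 2 * (1/2)^N" if "\<beta> \<in> fast_index_seqs a" for \<beta>
    using convergent_geometric_steps(2)[of "\<lambda>n. a (\<beta> n)"] that unfolding fast_index_seqs_def by simp
  have "dist (lim (\<lambda>n. a (\<beta> n))) (lim (\<lambda>n. a (\<alpha> n))) < e"
    if "\<beta> \<in> fast_index_seqs a" "agree_upto (Suc N) \<alpha> \<beta>" for \<beta>
  proof -
    have "\<beta> N = \<alpha> N" using that(2) unfolding agree_upto_def by auto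
    then show ?thesis
      using N close[OF that(1)] close[OF \<alpha>]
        dist_triangle[of "lim (\<lambda>n. a (\<beta> n))" "lim (\<lambda>n. a (\<alpha> n))" "a (\<alpha> N)"]
      by (simp add: dist_commute)
  qed
  then show "\<exists>n. \<forall>\<beta>\<in>fast_index_seqs a. agree_upto n \<alpha> \<beta> \<longrightarrow>
      dist (lim (\<lambda>n. a (\<beta> n))) (lim (\<lambda>n. a (\<alpha> n))) < e"
    by blast
qed

lemma closure_range_subset_lim_fast_index_seqs:
  fixes a :: "nat \<Rightarrow> 'a::metric_space"
  assumes "y \<in> closure (range a)"
  obtains \<alpha> where "\<alpha> \<in> fast_index_seqs a" "(\<lambda>n. a (\<alpha> n)) \<longlonglongrightarrow> y"
proof -
  have "\<exists>i. dist (a i) y < (1/2)^(n + 2)" for n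
  proof -
    have "(1/2::real)^(n + 2) > 0" by simp
    then obtain z where "z \<in> range a" "dist z y < (1/2)^(n + 2)"
      using assms unfolding closure_approachable by blast
    then show ?thesis by blast
  qed
  then obtain \<alpha> where \<alpha>: "\<And>n. dist (a (\<alpha> n)) y < (1/2)^(n + 2)" by (metis choice_iff)
  have "dist (a (\<alpha> n)) (a (\<alpha> (Suc n))) \<le> (1/2)^n" for n
  proof -
    have "dist (a (\<alpha> n)) (a (\<alpha> (Suc n))) \<le> dist (a (\<alpha> n)) y + dist (a (\<alpha> (Suc n))) y"
      by (rule dist_triangle2)
    also have "\<dots> \<le> (1/2)^(n + 2) + (1/2)^(Suc n + 2)" using \<alpha>[of n] \<alpha>[of "Suc n"] by linarith
    also have "\<dots> \<le> (1/2)^n" by (simp add: power_add)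
    finally show ?thesis .
  qed
  moreover have "(\<lambda>n. a (\<alpha> n)) \<longlonglongrightarrow> y"
  proof (rule tendstoI)
    fix e :: real assume "e > 0"
    then obtain N where N: "(1/2::real)^N < e" using real_arch_pow_inv[of e "1/2"] by auto
    have "dist (a (\<alpha> n)) y < e" if "N \<le> n" for n
    proof -
      have "(1/2::real)^(n + 2) \<le> (1/2)^N" using that by (intro power_decreasing) auto
      then show ?thesis using \<alpha>[of n] N by linarith
    qed
    then show "\<forall>\<^sub>F n in sequentially. dist (a (\<alpha> n)) y < e" by (rule eventually_sequentiallyI)
  qed
  ultimately show ?thesis using that unfolding fast_index_seqs_def by blast
qed

lemma analytic_set_closed:
  fixes C :: "'a::polish_space set"
  assumes "closed C"
  shows "analytic_set C"
proof (cases "C = {}")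
  case False
  obtain T where T: "countable T" "T \<subseteq> C" "C \<subseteq> closure T" using separable by blast
  with False have "T \<noteq> {}" by auto
  define a where "a = from_nat_into T"
  have a: "range a \<subseteq> C" "C \<subseteq> closure (range a)"
    using T \<open>T \<noteq> {}\<close> by (simp_all add: a_def range_from_nat_into)
  have "C = (\<lambda>\<alpha>. lim (\<lambda>n. a (\<alpha> n))) ` fast_index_seqs a"
  proof (intro equalityI subsetI)
    fix y assume "y \<in> C"
    then obtain \<alpha> where "\<alpha> \<in> fast_index_seqs a" "(\<lambda>n. a (\<alpha> n)) \<longlonglongrightarrow> y"
      using a(2) closure_range_subset_lim_fast_index_seqs by blast
    then show "y \<in> (\<lambda>\<alpha>. lim (\<lambda>n. a (\<alpha> n))) ` fast_index_seqs a" by (auto dest: limI)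
  next
    fix y assume "y \<in> (\<lambda>\<alpha>. lim (\<lambda>n. a (\<alpha> n))) ` fast_index_seqs a"
    then obtain \<alpha> where \<alpha>: "\<alpha> \<in> fast_index_seqs a" "y = lim (\<lambda>n. a (\<alpha> n))" by auto
    have "(\<lambda>n. a (\<alpha> n)) \<longlonglongrightarrow> y"
      using convergent_geometric_steps(1)[of "\<lambda>n. a (\<alpha> n)"] \<alpha> unfolding fast_index_seqs_def by simp
    moreover have "a (\<alpha> n) \<in> C" for n using a(1) by auto
    ultimately show "y \<in> C" using closed_sequentially[OF assms, of "\<lambda>n. a (\<alpha> n)" y] by blast
  qed
  moreover have "baire_closed (fast_index_seqs a)"
    unfolding fast_index_seqs_def by (rule baire_closed_consecutive)
  ultimately show ?thesis
    unfolding analytic_set_def using baire_continuous_on_lim_fast_index_seqs by (intro exI conjI)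
qed (simp add: analytic_set_empty)

lemma analytic_set_open:
  fixes U :: "'a::polish_space set"
  assumes "open U"
  shows "analytic_set U"
proof (cases "U = UNIV")
  case True
  then show ?thesis using analytic_set_closed[of UNIV] by simp
next
  case False
  have "U = (\<Union>n. {x. 1 / real (Suc n) \<le> infdist x (- U)})"
  proof (intro equalityI subsetI)
    fix x assume "x \<in> U"
    moreover have "closed (- U)" "- U \<noteq> {}" using assms False by auto
    ultimately have "infdist x (- U) > 0" using infdist_pos_not_in_closed by blast
    then obtain n where "inverse (real (Suc n)) < infdist x (- U)" by (blast dest: reals_Archimedean)
    then have "1 / real (Suc n) < infdist x (- U)" by (simp add: inverse_eq_divide)
    then show "x \<in> (\<Union>n. {x. 1 / real (Suc n) \<le> infdist x (- U)})" by (auto intro!: less_imp_le)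
  next
    fix x assume "x \<in> (\<Union>n. {x. 1 / real (Suc n) \<le> infdist x (- U)})"
    then obtain n where "1 / real (Suc n) \<le> infdist x (- U)" by blast
    moreover have "0 < 1 / real (Suc n)" by simp
    ultimately have "infdist x (- U) \<noteq> 0" by linarith
    then show "x \<in> U" using infdist_zero[of x "- U"] by (cases "x \<in> U") auto
  qed
  moreover have "closed {x. 1 / real (Suc n) \<le> infdist x (- U)}" for n
    by (intro closed_Collect_le continuous_on_const continuous_on_infdist continuous_on_id)
  then have "analytic_set (\<Union>n. {x. 1 / real (Suc n) \<le> infdist x (- U)})"
    by (intro analytic_set_UN analytic_set_closed)
  ultimately show ?thesis by simp
qed

lemma analytic_set_borel:
  fixes B :: "'a::polish_space set"
  assumes "B \<in> sets borel"
  shows "analytic_set B"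
proof -
  have "B \<in> sigma_sets UNIV {S. open S}" using assms by (simp add: sets_borel)
  then have "analytic_set B \<and> analytic_set (- B)"
  proof induction
    case (Basic a)
    then show ?case using analytic_set_open[of a] analytic_set_closed[of "- a"] by (simp add: closed_Compl)
  next
    case Empty
    then show ?case using analytic_set_empty analytic_set_closed[of UNIV] by simp
  next
    case (Compl a)
    then show ?case by (simp add: Compl_eq_Diff_UNIV[symmetric])
  next
    case (Union a)
    then show ?case using analytic_set_UN[of a] analytic_set_INT[of "\<lambda>i. - a i"] by (simp add: Compl_UN)
  qed
  then show ?thesis by simp
qed

lemma analytic_set_borel_image:
  fixes f :: "real \<Rightarrow> real"
  assumes f: "f \<in> borel_measurable borel" and B: "B \<in> sets borel"
  shows "analytic_set (f ` B)"
proof -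
  define \<Gamma> where "\<Gamma> = {p::real \<times> real. fst p \<in> B \<and> f (fst p) = snd p}"
  have "\<Gamma> = {p \<in> space (borel \<Otimes>\<^sub>M borel). fst p \<in> B \<and> f (fst p) - snd p = 0}"
    unfolding \<Gamma>_def by (auto simp: space_pair_measure)
  also have "\<dots> \<in> sets (borel \<Otimes>\<^sub>M borel)" using f B by measurable
  finally have "\<Gamma> \<in> sets borel" by (metis borel_prod)
  then have "analytic_set \<Gamma>" by (rule analytic_set_borel)
  then have "analytic_set (snd ` \<Gamma>)" by (rule analytic_set_continuous_image) (intro continuous_intros)
  moreover have "snd ` \<Gamma> = f ` B"
  proof (intro equalityI subsetI)
    fix y assume "y \<in> f ` B"
    then obtain b where "b \<in> B" "y = f b" by auto
    then have "(b, f b) \<in> \<Gamma>" "y = snd (b, f b)" unfolding \<Gamma>_def by auto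
    then show "y \<in> snd ` \<Gamma>" by (rule rev_image_eqI)
  qed (auto simp: \<Gamma>_def)
  ultimately show ?thesis by simp
qed

subsection \<open>Lusin's separation theorem\<close>

definition borel_separated :: "'a::topological_space set \<Rightarrow> 'a set \<Rightarrow> bool" where
  "borel_separated A B \<longleftrightarrow> (\<exists>D\<in>sets borel. A \<subseteq> D \<and> D \<inter> B = {})"

lemma borel_separated_UN:
  fixes A B :: "nat \<Rightarrow> 'a::topological_space set"
  assumes "\<And>i j. borel_separated (A i) (B j)"
  shows "borel_separated (\<Union>i. A i) (\<Union>j. B j)"
proof -
  define D where "D i j = (SOME D. D \<in> sets borel \<and> A i \<subseteq> D \<and> D \<inter> B j = {})" for i j
  have D: "D i j \<in> sets borel" "A i \<subseteq> D i j" "D i j \<inter> B j = {}" for i j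
    using someI_ex[OF assms[of i j, unfolded borel_separated_def Bex_def]] unfolding D_def by auto
  have "(\<Union>i. \<Inter>j. D i j) \<in> sets borel" using D(1) by (intro sets.countable_UN sets.countable_INT) auto
  moreover have "(\<Union>i. A i) \<subseteq> (\<Union>i. \<Inter>j. D i j)" using D(2) by auto
  moreover have "(\<Union>i. \<Inter>j. D i j) \<inter> (\<Union>j. B j) = {}" using D(3) by (auto simp: disjoint_iff)
  ultimately show ?thesis unfolding borel_separated_def by blast
qed

definition baire_cylinder :: "(nat \<Rightarrow> nat) set \<Rightarrow> (nat \<Rightarrow> nat) \<Rightarrow> nat \<Rightarrow> (nat \<Rightarrow> nat) set" where
  "baire_cylinder F s n = {a \<in> F. agree_upto n a s}"

lemma baire_cylinder_split:
  "baire_cylinder F s n = (\<Union>i. baire_cylinder F (s(n := i)) (Suc n))"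
proof (intro equalityI subsetI)
  fix a assume "a \<in> baire_cylinder F s n"
  then have "a \<in> baire_cylinder F (s(n := a n)) (Suc n)"
    unfolding baire_cylinder_def agree_upto_def by (auto simp: less_Suc_eq)
  then show "a \<in> (\<Union>i. baire_cylinder F (s(n := i)) (Suc n))" by blast
qed (auto simp: baire_cylinder_def agree_upto_def)

lemma not_borel_separated_refine:
  assumes "\<not> borel_separated (f ` baire_cylinder F s n) (g ` baire_cylinder G t n)"
  shows "\<exists>i j. \<not> borel_separated (f ` baire_cylinder F (s(n := i)) (Suc n))
                                  (g ` baire_cylinder G (t(n := j)) (Suc n))"
proof (rule ccontr)
  assume "\<not> ?thesis"
  then have "borel_separated (\<Union>i. f ` baire_cylinder F (s(n := i)) (Suc n))
      (\<Union>j. g ` baire_cylinder G (t(n := j)) (Suc n))"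
    by (intro borel_separated_UN) auto
  then have "borel_separated (f ` baire_cylinder F s n) (g ` baire_cylinder G t n)"
    by (subst (1 2) baire_cylinder_split) (simp add: image_UN)
  then show False using assms by simp
qed

text \<open>If two images are not Borel separated, refining the cylinders one coordinate at a time
  yields a branch \<open>(\<alpha>, \<beta>)\<close> along which no pair of cylinders is separated.\<close>

lemma not_borel_separated_branch:
  assumes "\<not> borel_separated (f ` F) (g ` G)"
  shows "\<exists>\<alpha> \<beta>. \<forall>n. \<not> borel_separated (f ` baire_cylinder F \<alpha> n) (g ` baire_cylinder G \<beta> n)"
proof -
  define P where "P (n::nat) p \<longleftrightarrow>
    \<not> borel_separated (f ` baire_cylinder F (fst p) n) (g ` baire_cylinder G (snd p) n)" for n p
  define Q where "Q (n::nat) (p :: (nat \<Rightarrow> nat) \<times> (nat \<Rightarrow> nat)) p' \<longleftrightarrow>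
    (\<exists>i j. p' = ((fst p)(n := i), (snd p)(n := j)))" for n p p'
  have "baire_cylinder H s 0 = H" for H s by (simp add: baire_cylinder_def agree_upto_def)
  then have "\<exists>p. P 0 p" using assms unfolding P_def by auto
  moreover have "\<exists>p'. P (Suc n) p' \<and> Q n p p'" if "P n p" for n p
  proof -
    have "\<exists>i j. \<not> borel_separated (f ` baire_cylinder F ((fst p)(n := i)) (Suc n))
        (g ` baire_cylinder G ((snd p)(n := j)) (Suc n))"
      using that unfolding P_def by (rule not_borel_separated_refine)
    then obtain i j where "P (Suc n) ((fst p)(n := i), (snd p)(n := j))" unfolding P_def by auto
    then show ?thesis unfolding Q_def by blast
  qed
  ultimately obtain p where p: "\<And>n. P n (p n)" "\<And>n. Q n (p n) (p (Suc n))"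
    using dependent_nat_choice[of P Q] by meson
  define \<alpha> where "\<alpha> k = fst (p (Suc k)) k" for k
  define \<beta> where "\<beta> k = snd (p (Suc k)) k" for k
  have "agree_upto n (fst (p n)) \<alpha> \<and> agree_upto n (snd (p n)) \<beta>" for n
  proof (induction n)
    case (Suc n)
    from p(2)[of n] obtain i j where "p (Suc n) = ((fst (p n))(n := i), (snd (p n))(n := j))"
      unfolding Q_def by blast
    then have "fst (p (Suc n)) = (fst (p n))(n := i)" "snd (p (Suc n)) = (snd (p n))(n := j)"
      by simp_all
    with Suc show ?case by (auto simp: agree_upto_def \<alpha>_def \<beta>_def less_Suc_eq)
  qed (simp add: agree_upto_def)
  then have "baire_cylinder F \<alpha> n = baire_cylinder F (fst (p n)) n"
      "baire_cylinder G \<beta> n = baire_cylinder G (snd (p n)) n" for n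
    unfolding baire_cylinder_def agree_upto_def by auto
  then have "\<not> borel_separated (f ` baire_cylinder F \<alpha> n) (g ` baire_cylinder G \<beta> n)" for n
    using p(1)[of n] unfolding P_def by simp
  then show ?thesis by blast
qed

lemma baire_closed_cylinders_nonempty:
  assumes "baire_closed F" "\<And>n. baire_cylinder F \<alpha> n \<noteq> {}"
  shows "\<alpha> \<in> F"
proof -
  have "\<exists>b\<in>F. agree_upto n \<alpha> b" for n
  proof -
    obtain b where "b \<in> baire_cylinder F \<alpha> n" using assms(2) by blast
    then show ?thesis unfolding baire_cylinder_def by (auto simp: agree_upto_commute)
  qed
  then show ?thesis using assms(1) unfolding baire_closed_def by blast
qed

text \<open>The separating set is a small ball around \<open>f \<alpha>\<close>.\<close>

lemma borel_separated_small_cylinders: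
  assumes "baire_continuous_on F f" "baire_continuous_on G g" "\<alpha> \<in> F" "\<beta> \<in> G" "f \<alpha> \<noteq> g \<beta>"
  shows "\<exists>N. borel_separated (f ` baire_cylinder F \<alpha> N) (g ` baire_cylinder G \<beta> N)"
proof -
  define e where "e = dist (f \<alpha>) (g \<beta>) / 2"
  have "e > 0" using assms(5) by (simp add: e_def)
  then obtain N1 N2 where
    N1: "\<And>b. b \<in> F \<Longrightarrow> agree_upto N1 \<alpha> b \<Longrightarrow> dist (f b) (f \<alpha>) < e" and
    N2: "\<And>b. b \<in> G \<Longrightarrow> agree_upto N2 \<beta> b \<Longrightarrow> dist (g b) (g \<beta>) < e"
    using assms(1-4) unfolding baire_continuous_on_def by meson
  define N where "N = max N1 N2"
  have close_f: "dist (f \<alpha>) (f b) < e" if "b \<in> baire_cylinder F \<alpha> N" for b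
    using that N1[of b] agree_upto_mono[of N b \<alpha> N1] agree_upto_commute[of N1]
    unfolding baire_cylinder_def N_def by (simp add: dist_commute)
  have far_g: "e \<le> dist (f \<alpha>) (g b)" if "b \<in> baire_cylinder G \<beta> N" for b
  proof -
    have "dist (g b) (g \<beta>) < e"
      using that N2[of b] agree_upto_mono[of N b \<beta> N2] agree_upto_commute[of N2]
      unfolding baire_cylinder_def N_def by simp
    then show ?thesis using dist_triangle[of "f \<alpha>" "g \<beta>" "g b"] by (simp add: e_def)
  qed
  have "borel_separated (f ` baire_cylinder F \<alpha> N) (g ` baire_cylinder G \<beta> N)"
    unfolding borel_separated_def
  proof (intro bexI[of _ "ball (f \<alpha>) e"] conjI)
    show "f ` baire_cylinder F \<alpha> N \<subseteq> ball (f \<alpha>) e" using close_f by auto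
    show "ball (f \<alpha>) e \<inter> g ` baire_cylinder G \<beta> N = {}" using far_g by fastforce
  qed simp
  then show ?thesis by blast
qed

theorem lusin_separation:
  fixes A B :: "'a::metric_space set"
  assumes "analytic_set A" "analytic_set B" "A \<inter> B = {}"
  shows "borel_separated A B"
proof (rule ccontr)
  assume "\<not> borel_separated A B"
  obtain F f where F: "baire_closed F" "baire_continuous_on F f" "A = f ` F"
    using assms(1) unfolding analytic_set_def by blast
  obtain G g where G: "baire_closed G" "baire_continuous_on G g" "B = g ` G"
    using assms(2) unfolding analytic_set_def by blast
  obtain \<alpha> \<beta> where branch:
      "\<And>n. \<not> borel_separated (f ` baire_cylinder F \<alpha> n) (g ` baire_cylinder G \<beta> n)"
    using not_borel_separated_branch[of f F g G] \<open>\<not> borel_separated A B\<close> unfolding F(3) G(3) by blast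
  have "baire_cylinder F \<alpha> n \<noteq> {}" "baire_cylinder G \<beta> n \<noteq> {}" for n
    using branch[of n] unfolding borel_separated_def
    by (auto intro!: bexI[of _ "{}"] bexI[of _ UNIV])
  then have "\<alpha> \<in> F" "\<beta> \<in> G" using F(1) G(1) baire_closed_cylinders_nonempty by blast+
  moreover have "f \<alpha> \<noteq> g \<beta>" using calculation assms(3) F(3) G(3) by blast
  ultimately show False using borel_separated_small_cylinders[OF F(2) G(2)] branch by blast
qed

section \<open>Standard Borel spaces as measurable retracts of the real line\<close>

definition measurable_retract :: "'a measure \<Rightarrow> 'b measure \<Rightarrow> bool" where
  "measurable_retract A B \<longleftrightarrow>
     (\<exists>i r. i \<in> A \<rightarrow>\<^sub>M B \<and> r \<in> B \<rightarrow>\<^sub>M A \<and> (\<forall>x\<in>space A. r (i x) = x))"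

lemma measurable_retract_trans:
  assumes "measurable_retract A B" "measurable_retract B C"
  shows "measurable_retract A C"
proof -
  obtain i r where ir: "i \<in> A \<rightarrow>\<^sub>M B" "r \<in> B \<rightarrow>\<^sub>M A" "\<And>x. x \<in> space A \<Longrightarrow> r (i x) = x"
    using assms(1) unfolding measurable_retract_def by blast
  obtain j s where js: "j \<in> B \<rightarrow>\<^sub>M C" "s \<in> C \<rightarrow>\<^sub>M B" "\<And>x. x \<in> space B \<Longrightarrow> s (j x) = x"
    using assms(2) unfolding measurable_retract_def by blast
  have "\<forall>x\<in>space A. (r \<circ> s) ((j \<circ> i) x) = x"
    using ir js measurable_space[OF ir(1)] by simp
  moreover have "j \<circ> i \<in> A \<rightarrow>\<^sub>M C" "r \<circ> s \<in> C \<rightarrow>\<^sub>M A"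
    using ir js by (auto intro: measurable_comp)
  ultimately show ?thesis unfolding measurable_retract_def by blast
qed

lemma measurable_retract_pair:
  assumes "measurable_retract A A'" "measurable_retract B B'"
  shows "measurable_retract (A \<Otimes>\<^sub>M B) (A' \<Otimes>\<^sub>M B')"
proof -
  obtain i r where ir: "i \<in> A \<rightarrow>\<^sub>M A'" "r \<in> A' \<rightarrow>\<^sub>M A" "\<And>x. x \<in> space A \<Longrightarrow> r (i x) = x"
    using assms(1) unfolding measurable_retract_def by blast
  obtain j s where js: "j \<in> B \<rightarrow>\<^sub>M B'" "s \<in> B' \<rightarrow>\<^sub>M B" "\<And>x. x \<in> space B \<Longrightarrow> s (j x) = x"
    using assms(2) unfolding measurable_retract_def by blast
  have "map_prod i j \<in> A \<Otimes>\<^sub>M B \<rightarrow>\<^sub>M A' \<Otimes>\<^sub>M B'" "map_prod r s \<in> A' \<Otimes>\<^sub>M B' \<rightarrow>\<^sub>M A \<Otimes>\<^sub>M B"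
    using ir js by (auto intro!: measurable_pair simp: map_prod_def split_beta')
  moreover have "\<forall>x\<in>space (A \<Otimes>\<^sub>M B). map_prod r s (map_prod i j x) = x"
    using ir js by (auto simp: space_pair_measure)
  ultimately show ?thesis unfolding measurable_retract_def by blast
qed

subsection \<open>Coding real sequences by a single real\<close>

definition binary_digit :: "real \<Rightarrow> nat \<Rightarrow> real" where
  "binary_digit y k = of_int (\<lfloor>2^(Suc k) * y\<rfloor> mod 2)"

lemma floor_double: "\<lfloor>2 * z\<rfloor> = 2 * \<lfloor>z\<rfloor> + \<lfloor>2 * z\<rfloor> mod 2" for z :: real
proof -
  have "2 * \<lfloor>z\<rfloor> \<le> \<lfloor>2 * z\<rfloor>" by (simp add: le_floor_iff)
  moreover have "\<lfloor>2 * z\<rfloor> < 2 * \<lfloor>z\<rfloor> + 2"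
    unfolding floor_less_iff using real_of_int_floor_add_one_gt[of z] by (simp, linarith)
  ultimately show ?thesis by presburger
qed

lemma binary_digit_01: "binary_digit y k = 0 \<or> binary_digit y k = 1"
proof -
  have "\<lfloor>2^(Suc k) * y\<rfloor> mod 2 = 0 \<or> \<lfloor>2^(Suc k) * y\<rfloor> mod 2 = 1" by presburger
  then show ?thesis unfolding binary_digit_def by auto
qed

lemma binary_digit_partial_sum:
  assumes "0 \<le> y" "y < 1"
  shows "(\<Sum>k<n. binary_digit y k / 2^(Suc k)) = of_int \<lfloor>2^n * y\<rfloor> / 2^n"
proof (induction n)
  case 0
  have "\<lfloor>y\<rfloor> = 0" using assms by (simp add: floor_eq_iff)
  then show ?case by simp
next
  case (Suc n)
  have double: "\<lfloor>2^(Suc n) * y\<rfloor> = 2 * \<lfloor>2^n * y\<rfloor> + \<lfloor>2^(Suc n) * y\<rfloor> mod 2"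
    using floor_double[of "2^n * y"] by (simp add: mult.assoc)
  have "(\<Sum>k<Suc n. binary_digit y k / 2^(Suc k))
      = (2 * of_int \<lfloor>2^n * y\<rfloor> + binary_digit y n) / 2^(Suc n)"
    using Suc by (simp add: field_simps)
  also have "\<dots> = of_int \<lfloor>2^(Suc n) * y\<rfloor> / 2^(Suc n)"
    unfolding binary_digit_def using arg_cong[OF double, of "of_int :: int \<Rightarrow> real"] by simp
  finally show ?case .
qed

lemma binary_digit_sums:
  assumes "0 \<le> y" "y < 1"
  shows "(\<lambda>k. binary_digit y k / 2^(Suc k)) sums y"
  unfolding sums_def binary_digit_partial_sum[OF assms]
proof (rule tendsto_sandwich[of "\<lambda>n. y - (1/2)^n" _ _ "\<lambda>n. y"])
  show "\<forall>\<^sub>F n in sequentially. y - (1/2)^n \<le> of_int \<lfloor>2^n * y\<rfloor> / 2^n"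
  proof (intro always_eventually allI)
    fix n :: nat
    have "2^n * y - 1 \<le> of_int \<lfloor>2^n * y\<rfloor>" using real_of_int_floor_add_one_gt[of "2^n * y"] by linarith
    then have "(2^n * y - 1) / 2^n \<le> of_int \<lfloor>2^n * y\<rfloor> / 2^n" by (intro divide_right_mono) auto
    then show "y - (1/2)^n \<le> of_int \<lfloor>2^n * y\<rfloor> / 2^n" by (simp add: field_simps power_divide)
  qed
  show "\<forall>\<^sub>F n in sequentially. of_int \<lfloor>2^n * y\<rfloor> / 2^n \<le> y"
    by (intro always_eventually allI) (simp add: field_simps)
  show "(\<lambda>n. y - (1/2::real)^n) \<longlonglongrightarrow> y"
    using tendsto_diff[OF tendsto_const[of y] LIMSEQ_power_zero[of "1/2::real"]] by simp
qed simp

definition squash :: "real \<Rightarrow> real" where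
  "squash t = 1/2 + t / (2 * (1 + \<bar>t\<bar>))"

definition unsquash :: "real \<Rightarrow> real" where
  "unsquash y = (2 * y - 1) / (1 - \<bar>2 * y - 1\<bar>)"

lemma squash_eq: "squash t = 1/2 + (t / (1 + \<bar>t\<bar>)) / 2"
  unfolding squash_def by simp

lemma squash_bounds: "0 < squash t \<and> squash t < 1"
proof -
  define u where "u = t / (1 + \<bar>t\<bar>)"
  have "\<bar>u\<bar> < 1" unfolding u_def by (simp add: abs_divide divide_less_eq)
  moreover have "squash t = 1/2 + u/2" unfolding squash_eq u_def ..
  ultimately show ?thesis by (simp add: abs_less_iff)
qed

lemma unsquash_squash: "unsquash (squash t) = t"
proof -
  define u where "u = t / (1 + \<bar>t\<bar>)"
  have pos: "1 + \<bar>t\<bar> > 0" by simp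
  have "squash t = 1/2 + u/2" unfolding squash_eq u_def ..
  then have "2 * squash t - 1 = u" by simp
  moreover have "1 - \<bar>u\<bar> = 1 / (1 + \<bar>t\<bar>)"
    using pos unfolding u_def by (simp add: abs_divide divide_simps)
  ultimately have "unsquash (squash t) = u / (1 / (1 + \<bar>t\<bar>))" unfolding unsquash_def by simp
  also have "\<dots> = t" unfolding u_def using pos by simp
  finally show ?thesis .
qed

text \<open>Binary digits are written in base 4: with digits in \<open>{0, 1}\<close> no carries occur, so
  every digit can be read off again.\<close>

definition base4_code :: "(nat \<Rightarrow> real) \<Rightarrow> real" where
  "base4_code b = (\<Sum>m. b m / 4^(Suc m))"

definition base4_digit :: "real \<Rightarrow> nat \<Rightarrow> real" where
  "base4_digit t m = of_int (\<lfloor>4^(Suc m) * t\<rfloor> mod 4)"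

lemma base4_tail_bounds:
  fixes b :: "nat \<Rightarrow> real"
  assumes b01: "\<And>m. b m = 0 \<or> b m = 1"
  shows "summable (\<lambda>i. b i / 4^(Suc i))" "0 \<le> (\<Sum>i. b i / 4^(Suc i))" "(\<Sum>i. b i / 4^(Suc i)) \<le> 1/3"
proof -
  have bnd: "0 \<le> b i / 4^(Suc i)" "b i / 4^(Suc i) \<le> (1/4)^(Suc i)"
    and norm_bnd: "norm (b i / 4^(Suc i)) \<le> (1/4)^(Suc i)" for i
    using b01[of i] by (auto simp: power_divide)
  have geom: "(\<lambda>i. (1/4::real)^(Suc i)) sums (1/3)"
    using sums_mult[OF geometric_sums[of "1/4::real"], of "1/4"] by simp
  show sb: "summable (\<lambda>i. b i / 4^(Suc i))"
    using summable_comparison_test'[OF sums_summable[OF geom] norm_bnd] .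
  show "0 \<le> (\<Sum>i. b i / 4^(Suc i))" using bnd by (intro suminf_nonneg sb) auto
  have "(\<Sum>i. b i / 4^(Suc i)) \<le> (\<Sum>i. (1/4)^(Suc i))"
    using bnd by (intro suminf_le sb sums_summable[OF geom])
  then show "(\<Sum>i. b i / 4^(Suc i)) \<le> 1/3" using sums_unique[OF geom] by simp
qed

lemma base4_prefix_integer:
  fixes b :: "nat \<Rightarrow> real"
  assumes b01: "\<And>m. b m = 0 \<or> b m = 1"
  shows "\<exists>J::int. 4^(Suc m) * (\<Sum>i<Suc m. b i / 4^(Suc i)) = of_int J \<and> J mod 4 = b m"
proof (induction m)
  case 0
  show ?case using b01[of 0] by (intro exI[of _ "if b 0 = 1 then 1 else 0"]) auto
next
  case (Suc m)
  then obtain J :: int where J: "4^(Suc m) * (\<Sum>i<Suc m. b i / 4^(Suc i)) = of_int J" by blast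
  define J' where "J' = 4 * J + (if b (Suc m) = 1 then 1 else 0)"
  have "4^(Suc (Suc m)) * (\<Sum>i<Suc (Suc m). b i / 4^(Suc i))
      = 4 * (4^(Suc m) * (\<Sum>i<Suc m. b i / 4^(Suc i))) + b (Suc m)"
    by (simp add: field_simps)
  also have "\<dots> = of_int J'" using J b01[of "Suc m"] by (auto simp: J'_def)
  finally show ?case using b01[of "Suc m"] by (intro exI[of _ J']) (auto simp: J'_def)
qed

lemma base4_digit_code:
  fixes b :: "nat \<Rightarrow> real"
  assumes b01: "\<And>m. b m = 0 \<or> b m = 1"
  shows "base4_digit (base4_code b) m = b m"
proof -
  obtain J :: int where J: "4^(Suc m) * (\<Sum>i<Suc m. b i / 4^(Suc i)) = of_int J" "J mod 4 = b m"
    using base4_prefix_integer[of b m, OF b01] by blast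
  define T where "T = (\<Sum>i. b (i + Suc m) / 4^(Suc i))"
  have T: "0 \<le> T" "T \<le> 1/3" unfolding T_def using base4_tail_bounds[of "\<lambda>i. b (i + Suc m)"] b01 by auto
  have sb: "summable (\<lambda>i. b i / 4^(Suc i))" using base4_tail_bounds[OF b01] by simp
  have "4^(Suc m) * base4_code b
      = 4^(Suc m) * (\<Sum>i. b (i + Suc m) / 4^(Suc (i + Suc m))) + of_int J"
    unfolding base4_code_def suminf_split_initial_segment[OF sb, of "Suc m"] J(1)[symmetric]
    by (simp add: field_simps)
  also have "4^(Suc m) * (\<Sum>i. b (i + Suc m) / 4^(Suc (i + Suc m))) = T"
    unfolding T_def using summable_ignore_initial_segment[OF sb, of "Suc m"]
    by (subst suminf_mult[symmetric]) (auto intro!: suminf_cong simp: power_add field_simps)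
  finally have "\<lfloor>4^(Suc m) * base4_code b\<rfloor> = J" using T by (simp add: floor_eq_iff)
  then show ?thesis unfolding base4_digit_def using J(2) by simp
qed

definition seq_code :: "(nat \<Rightarrow> real) \<Rightarrow> real" where
  "seq_code y = base4_code (\<lambda>m. binary_digit (squash (y (fst (prod_decode m)))) (snd (prod_decode m)))"

definition seq_decode :: "real \<Rightarrow> nat \<Rightarrow> real" where
  "seq_decode t n = unsquash (\<Sum>k. base4_digit t (prod_encode (n, k)) / 2^(Suc k))"

lemma seq_decode_code: "seq_decode (seq_code y) = y"
proof
  fix n
  have "base4_digit (seq_code y) m = binary_digit (squash (y (fst (prod_decode m)))) (snd (prod_decode m))"
    for m unfolding seq_code_def by (rule base4_digit_code) (simp add: binary_digit_01)
  then have "(\<Sum>k. base4_digit (seq_code y) (prod_encode (n, k)) / 2^(Suc k))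
      = (\<Sum>k. binary_digit (squash (y n)) k / 2^(Suc k))"
    by simp
  also have "\<dots> = squash (y n)"
    using binary_digit_sums[of "squash (y n)"] squash_bounds[of "y n"] by (simp add: sums_iff)
  finally show "seq_decode (seq_code y) n = y n" unfolding seq_decode_def by (simp add: unsquash_squash)
qed

lemma measurable_retract_PiM_real:
  "measurable_retract (Pi\<^sub>M UNIV (\<lambda>_::nat. borel :: real measure)) (borel :: real measure)"
  unfolding measurable_retract_def
proof (intro exI conjI)
  show "seq_code \<in> borel_measurable (Pi\<^sub>M UNIV (\<lambda>_::nat. borel))"
    unfolding seq_code_def base4_code_def binary_digit_def squash_def by measurable
  have "(\<lambda>t. \<Sum>k. base4_digit t (prod_encode (n, k)) / 2^(Suc k)) \<in> borel_measurable borel" for n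
    by (intro borel_measurable_suminf) (unfold base4_digit_def, measurable)
  moreover have "unsquash \<in> borel_measurable borel" unfolding unsquash_def by measurable
  ultimately show "seq_decode \<in> borel \<rightarrow>\<^sub>M Pi\<^sub>M UNIV (\<lambda>_::nat. borel)"
    unfolding seq_decode_def by (intro measurable_PiM_single') (auto intro: measurable_compose)
qed (simp add: seq_decode_code)

lemma measurable_retract_pair_real:
  "measurable_retract (borel \<Otimes>\<^sub>M borel :: (real \<times> real) measure) (borel :: real measure)"
proof -
  have "measurable_retract (borel \<Otimes>\<^sub>M borel :: (real \<times> real) measure)
      (Pi\<^sub>M UNIV (\<lambda>_::nat. borel :: real measure))"
    unfolding measurable_retract_def
  proof (intro exI conjI)
    show "(\<lambda>p n. if n = 0 then fst p else snd p) \<in> borel \<Otimes>\<^sub>M borel \<rightarrow>\<^sub>M Pi\<^sub>M UNIV (\<lambda>_::nat. borel)"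
      by (rule measurable_PiM_single') (measurable, auto)
    show "(\<lambda>y. (y 0, y 1)) \<in> Pi\<^sub>M UNIV (\<lambda>_::nat. borel) \<rightarrow>\<^sub>M borel \<Otimes>\<^sub>M (borel :: real measure)"
      by measurable
  qed simp
  then show ?thesis using measurable_retract_PiM_real by (rule measurable_retract_trans)
qed

subsection \<open>Polish spaces embed into \<open>\<real>\<^sup>\<nat>\<close>\<close>

lemma sets_borel_of: "sets (borel_of T) = sigma_sets (topspace T) {U. openin T U}"
  unfolding borel_of_def by (rule sets_measure_of) (auto dest: openin_subset)

lemma openin_in_borel_of: "openin T U \<Longrightarrow> U \<in> sets (borel_of T)"
  unfolding sets_borel_of by auto

lemma gdelta_in_imp_borel:
  assumes "gdelta_in euclidean S"
  shows "S \<in> sets borel"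
proof -
  obtain \<U> where U: "countable \<U>" "\<U> \<subseteq> Collect open" "S = \<Inter>\<U>"
    using assms unfolding gdelta_in_def intersection_of_def relative_to_def by auto
  have "\<Inter>(id ` \<U>) \<in> sets borel" using U(1,2) by (intro sets.countable_INT'') auto
  then show ?thesis using U(3) by simp
qed

context Metric_space
begin

lemma dense_sequence_exists:
  assumes "separable_space mtopology" "M \<noteq> {}"
  obtains a :: "nat \<Rightarrow> 'a" where "range a \<subseteq> M" "\<forall>x\<in>M. \<forall>r>0. \<exists>j. d x (a j) < r"
proof -
  obtain C where C: "countable C" "C \<subseteq> M" "mtopology closure_of C = M"
    using assms(1) unfolding separable_space_def by auto
  have "C \<noteq> {}" using C(3) assms(2) by auto
  define a where "a = from_nat_into C"
  have C_eq: "C = range a" using C(1) \<open>C \<noteq> {}\<close> by (simp add: a_def range_from_nat_into)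
  have "\<exists>j. d x (a j) < r" if x: "x \<in> M" and r: "r > 0" for x r
  proof -
    obtain y where "y \<in> C" "y \<in> mball x r" using C(3) x r unfolding metric_closure_of by blast
    then show ?thesis unfolding C_eq by auto
  qed
  then show ?thesis using C(2) C_eq by (intro that[of a]) auto
qed

context
  fixes a :: "nat \<Rightarrow> 'a"
  assumes range_a: "range a \<subseteq> M" and dense: "\<forall>x\<in>M. \<forall>r>0. \<exists>j. d x (a j) < r"
begin

lemma inj_on_dist_embedding: "inj_on (\<lambda>x j. d x (a j)) M"
proof
  fix x y assume xy: "x \<in> M" "y \<in> M" "(\<lambda>j. d x (a j)) = (\<lambda>j. d y (a j))"
  show "x = y"
  proof (rule ccontr)
    assume "x \<noteq> y"
    then have "d x y / 2 > 0" using xy by simp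
    then obtain j where j: "d x (a j) < d x y / 2" using dense xy(1) by blast
    have "d y (a j) = d x (a j)" using xy(3) by metis
    moreover have "d x y \<le> d x (a j) + d (a j) y" using triangle xy range_a by blast
    ultimately show False using j commute[of y "a j"] by linarith
  qed
qed

lemma dist_embedding_open_image:
  assumes U: "openin mtopology U"
  shows "\<exists>V. open V \<and> (\<lambda>x j. d x (a j)) ` U = (\<lambda>x j. d x (a j)) ` M \<inter> V"
proof -
  let ?e = "\<lambda>x j. d x (a j)"
  have UM: "U \<subseteq> M" using U openin_mtopology by blast
  have "\<exists>j r. r > 0 \<and> mball x (3 * r) \<subseteq> U \<and> d x (a j) < r" if x: "x \<in> U" for x
  proof -
    obtain r where r: "r > 0" "mball x r \<subseteq> U" using U x unfolding openin_mtopology by blast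
    obtain j where "d x (a j) < r / 3" using dense x UM r by (meson divide_pos_pos subsetD zero_less_numeral)
    then show ?thesis using r by (intro exI[of _ j] exI[of _ "r / 3"]) auto
  qed
  then obtain J R where JR: "\<And>x. x \<in> U \<Longrightarrow> R x > 0 \<and> mball x (3 * R x) \<subseteq> U \<and> d x (a (J x)) < R x"
    by metis
  define V where "V = (\<Union>x\<in>U. {y::nat \<Rightarrow> real. \<bar>y (J x) - d x (a (J x))\<bar> < R x})"
  have "open V" unfolding V_def
    by (intro open_UN ballI open_Collect_less continuous_intros continuous_on_product_coordinates)
  moreover have "?e ` U = ?e ` M \<inter> V"
  proof (intro equalityI subsetI)
    fix y assume "y \<in> ?e ` U"
    then obtain x where x: "x \<in> U" "y = ?e x" by auto
    then have "y \<in> {y. \<bar>y (J x) - d x (a (J x))\<bar> < R x}" using JR[of x] by simp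
    then show "y \<in> ?e ` M \<inter> V" using x UM unfolding V_def by blast
  next
    fix y assume "y \<in> ?e ` M \<inter> V"
    then obtain x' x where x': "x' \<in> M" "y = ?e x'" and x: "x \<in> U"
      and close: "\<bar>d x' (a (J x)) - d x (a (J x))\<bar> < R x"
      unfolding V_def by auto
    have xM: "x \<in> M" using x UM by auto
    have "d x x' \<le> d x (a (J x)) + d (a (J x)) x'" using triangle xM x'(1) range_a by blast
    also have "\<dots> < 3 * R x" using close JR[OF x] commute[of x' "a (J x)"] by linarith
    finally have "x' \<in> U" using JR[OF x] xM x'(1) by auto
    then show "y \<in> ?e ` U" using x' by blast
  qed
  ultimately show ?thesis by blast
qed

lemma continuous_map_dist_embedding: "continuous_map mtopology euclidean (\<lambda>x j. d x (a j))"
proof -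
  have "continuous_map mtopology euclideanreal (\<lambda>x. d x (a j))" for j
  proof -
    have "continuous_map mtopology euclideanreal (\<lambda>x. mdist (metric (M, d)) (id x) ((\<lambda>_. a j) x))"
      using range_a by (intro continuous_map_mdist) (auto simp: mtopology_of Metric_space_axioms)
    then show ?thesis by (simp add: mdist_metric Metric_space_axioms)
  qed
  then show ?thesis
    unfolding euclidean_product_topology[symmetric] continuous_map_componentwise_UNIV by simp
qed


lemma dist_embedding_image_borel:
  assumes "mcomplete"
  shows "(\<lambda>x j. d x (a j)) ` M \<in> sets borel"
proof -
  let ?e = "\<lambda>x j. d x (a j)"
  have "homeomorphic_map mtopology (subtopology euclidean (?e ` M)) ?e"
  proof (rule bijective_open_imp_homeomorphic_map)
    show "continuous_map mtopology (subtopology euclidean (?e ` M)) ?e"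
      using continuous_map_dist_embedding by (simp add: continuous_map_into_subtopology)
    show "open_map mtopology (subtopology euclidean (?e ` M)) ?e"
      using dist_embedding_open_image unfolding open_map_def by (fastforce simp: openin_subtopology)
  qed (use inj_on_dist_embedding in simp_all)
  then have "completely_metrizable_space (subtopology euclidean (?e ` M))"
    using homeomorphic_completely_metrizable_space completely_metrizable_space_mtopology[OF assms]
    unfolding homeomorphic_space_def homeomorphic_map_maps by blast
  then show ?thesis
    by (intro gdelta_in_imp_borel completely_metrizable_space_imp_gdelta_in metrizable_space_euclidean) auto
qed

end

end

lemma measurable_inv_into_open_embedding:
  fixes e :: "'a \<Rightarrow> 'b::topological_space"
  assumes img: "e ` topspace T \<in> sets borel" and inj: "inj_on e (topspace T)"
    and open_img: "\<And>U. openin T U \<Longrightarrow> \<exists>V. open V \<and> e ` U = e ` topspace T \<inter> V"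
    and x0: "x0 \<in> topspace T"
  shows "(\<lambda>y. if y \<in> e ` topspace T then inv_into (topspace T) e y else x0) \<in> borel \<rightarrow>\<^sub>M borel_of T"
    (is "?r \<in> _")
  unfolding borel_of_def
proof (rule measurable_measure_of)
  show "{U. openin T U} \<subseteq> Pow (topspace T)" by (auto dest: openin_subset)
  show "?r \<in> space borel \<rightarrow> topspace T" using x0 inv_into_into[of _ e "topspace T"] by auto
  fix U assume "U \<in> {U. openin T U}"
  then have U: "openin T U" by simp
  obtain V where V: "open V" "e ` U = e ` topspace T \<inter> V" using open_img[OF U] by blast
  have "?r -` U \<inter> space borel = (e ` topspace T \<inter> V) \<union> (if x0 \<in> U then - e ` topspace T else {})"
  proof -
    have "?r y \<in> U \<longleftrightarrow> y \<in> V" if y: "y \<in> e ` topspace T" for y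
    proof -
      obtain x where x: "x \<in> topspace T" "y = e x" using y by auto
      have "?r y \<in> U \<longleftrightarrow> x \<in> U" using inj x by simp
      also have "\<dots> \<longleftrightarrow> e x \<in> e ` U" using inj x openin_subset[OF U] by (auto simp: inj_on_image_mem_iff)
      also have "\<dots> \<longleftrightarrow> y \<in> V" using V(2) x by auto
      finally show ?thesis .
    qed
    then show ?thesis by (auto split: if_split_asm)
  qed
  also have "\<dots> \<in> sets borel" using img V(1) by auto
  finally show "?r -` U \<inter> space borel \<in> sets borel" .
qed

lemma standard_borel_measurable_retract_PiM:
  assumes "standard_borel X" and "space X \<noteq> {}"
  shows "measurable_retract X (Pi\<^sub>M UNIV (\<lambda>_::nat. borel :: real measure))"
proof -
  obtain T where T: "Polish_space T" "topspace T = space X" "sets X = sets (borel_of T)"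
    using assms(1) unfolding standard_borel_def by blast
  obtain M d where Md: "Metric_space M d" "Metric_space.mcomplete M d" "T = Metric_space.mtopology M d"
    using T(1) unfolding Polish_space_def completely_metrizable_space_def by blast
  interpret Metric_space M d by (rule Md(1))
  have TM: "topspace T = M" using Md(3) by simp
  have XM: "space X = M" using T(2) TM by simp
  have "separable_space mtopology" "M \<noteq> {}"
    using T(1) Md(3) assms(2) XM unfolding Polish_space_def by auto
  then obtain a :: "nat \<Rightarrow> _" where range_a: "range a \<subseteq> M" and dense: "\<forall>x\<in>M. \<forall>r>0. \<exists>j. d x (a j) < r"
    by (rule dense_sequence_exists)
  define e where "e = (\<lambda>x j. d x (a j))"
  have inj: "inj_on e M" unfolding e_def by (rule inj_on_dist_embedding[OF range_a dense])
  have "(\<lambda>x. d x c) \<in> borel_measurable X" if "c \<in> M" for c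
  proof (rule borel_measurableI_less)
    fix y :: real
    have "{x \<in> space X. d x c < y} = mball c y" using that commute XM by (auto simp: mball_def)
    then show "{x \<in> space X. d x c < y} \<in> sets X" unfolding T(3) Md(3) by (simp add: openin_in_borel_of)
  qed
  then have "e \<in> X \<rightarrow>\<^sub>M Pi\<^sub>M UNIV (\<lambda>_. borel)"
    unfolding e_def using range_a by (intro measurable_PiM_single') auto
  moreover obtain x0 where x0: "x0 \<in> M" using assms(2) XM by auto
  define r where "r y = (if y \<in> e ` M then inv_into M e y else x0)" for y
  have "r \<in> borel \<rightarrow>\<^sub>M borel_of T"
    unfolding r_def TM[symmetric]
  proof (rule measurable_inv_into_open_embedding)
    show "e ` topspace T \<in> sets borel" "x0 \<in> topspace T" "inj_on e (topspace T)"
      using dist_embedding_image_borel[OF range_a dense Md(2)] x0 inj TM by (simp_all add: e_def)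
    show "\<exists>V. open V \<and> e ` U = e ` topspace T \<inter> V" if "openin T U" for U
      using dist_embedding_open_image[OF range_a dense, of U] that TM Md(3) by (simp add: e_def)
  qed
  then have "r \<in> Pi\<^sub>M UNIV (\<lambda>_::nat. borel :: real measure) \<rightarrow>\<^sub>M X"
    using measurable_cong_sets[OF sets_PiM_equal_borel T(3)] by blast
  moreover have "r (e x) = x" if "x \<in> space X" for x using that inj XM by (simp add: r_def)
  ultimately show ?thesis unfolding measurable_retract_def by blast
qed

lemma standard_borel_measurable_retract_real:
  assumes "standard_borel X" and "space X \<noteq> {}"
  shows "measurable_retract X (borel :: real measure)"
  using measurable_retract_trans[OF standard_borel_measurable_retract_PiM[OF assms]
      measurable_retract_PiM_real] .

subsection \<open>Functions constant on the fibres of a Borel map\<close>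

lemma INF_rat_greater: "(\<Sqinter>c::rat. if y < of_rat c then ereal (of_rat c) else \<infinity>) = ereal y"
proof (rule INF_eqI)
  fix z assume z: "\<And>c. c \<in> UNIV \<Longrightarrow> z \<le> (if y < of_rat c then ereal (of_rat c) else \<infinity>)"
  show "z \<le> ereal y"
  proof (rule ccontr)
    assume "\<not> z \<le> ereal y"
    then obtain r where r: "ereal y < ereal r" "ereal r < z" using ereal_dense2 by (meson not_le)
    then obtain c where c: "y < of_rat c" "of_rat c < r" using of_rat_dense by auto
    have "z \<le> ereal (of_rat c)" using z[of c] c(1) by simp
    moreover have "ereal (of_rat c) < z" using c(2) r(2) by (simp add: less_trans[of _ "ereal r"])
    ultimately show False by simp
  qed
qed auto

lemma saturated_borel_eq_vimage_real:
  fixes \<Phi> :: "real \<Rightarrow> real"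
  assumes \<Phi>: "\<Phi> \<in> borel_measurable borel" and U: "U \<in> sets borel"
    and saturated: "\<And>t s. \<Phi> t = \<Phi> s \<Longrightarrow> t \<in> U \<longleftrightarrow> s \<in> U"
  shows "\<exists>D\<in>sets borel. \<forall>t. \<Phi> t \<in> D \<longleftrightarrow> t \<in> U"
proof -
  have "\<Phi> ` U \<inter> \<Phi> ` (- U) = {}"
  proof (rule ccontr)
    assume "\<Phi> ` U \<inter> \<Phi> ` (- U) \<noteq> {}"
    then obtain t s where "t \<in> U" "s \<notin> U" "\<Phi> t = \<Phi> s" by auto
    then show False using saturated[of t s] by simp
  qed
  moreover have "- U \<in> sets borel" using U by auto
  ultimately have "borel_separated (\<Phi> ` U) (\<Phi> ` (- U))"
    by (intro lusin_separation analytic_set_borel_image \<Phi> U)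
  then obtain D where D: "D \<in> sets borel" "\<Phi> ` U \<subseteq> D" "D \<inter> \<Phi> ` (- U) = {}"
    unfolding borel_separated_def by blast
  have "\<Phi> t \<in> D \<longleftrightarrow> t \<in> U" for t
  proof
    assume "\<Phi> t \<in> D"
    then have "\<Phi> t \<notin> \<Phi> ` (- U)" using D(3) by blast
    then show "t \<in> U" using imageI[of t "- U" \<Phi>] by auto
  qed (use D(2) in blast)
  then show ?thesis using D(1) by (intro bexI[of _ D] allI)
qed

lemma saturated_set_eq_vimage:
  assumes rX: "measurable_retract X (borel :: real measure)"
    and rM: "measurable_retract MM (borel :: real measure)"
    and M: "M \<in> X \<rightarrow>\<^sub>M MM" and A: "A \<in> sets X"
    and saturated: "\<And>x y. x \<in> space X \<Longrightarrow> y \<in> space X \<Longrightarrow> M x = M y \<Longrightarrow> x \<in> A \<Longrightarrow> y \<in> A"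
  shows "\<exists>D\<in>sets MM. \<forall>x\<in>space X. M x \<in> D \<longleftrightarrow> x \<in> A"
proof -
  obtain iX :: "_ \<Rightarrow> real" and rX where iX: "iX \<in> X \<rightarrow>\<^sub>M borel" "rX \<in> borel \<rightarrow>\<^sub>M X"
      "\<And>x. x \<in> space X \<Longrightarrow> rX (iX x) = x"
    using rX unfolding measurable_retract_def by blast
  obtain iM :: "_ \<Rightarrow> real" and rM where iM: "iM \<in> MM \<rightarrow>\<^sub>M borel" "rM \<in> borel \<rightarrow>\<^sub>M MM"
      "\<And>m. m \<in> space MM \<Longrightarrow> rM (iM m) = m"
    using rM unfolding measurable_retract_def by blast
  have rX_space: "rX t \<in> space X" for t by (rule measurable_space[OF iX(2)]) simp
  have "\<exists>D\<in>sets borel. \<forall>t. iM (M (rX t)) \<in> D \<longleftrightarrow> t \<in> rX -` A"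
  proof (rule saturated_borel_eq_vimage_real)
    show "(\<lambda>t. iM (M (rX t))) \<in> borel_measurable borel"
      by (intro measurable_compose[OF _ iM(1)] measurable_compose[OF iX(2) M])
    show "rX -` A \<in> sets borel" using measurable_sets[OF iX(2) A] by simp
    fix t s assume "iM (M (rX t)) = iM (M (rX s))"
    then have "rM (iM (M (rX t))) = rM (iM (M (rX s)))" by simp
    then have "M (rX t) = M (rX s)" using iM(3) measurable_space[OF M rX_space] by simp
    then show "t \<in> rX -` A \<longleftrightarrow> s \<in> rX -` A"
      using saturated[OF rX_space rX_space, of t s] saturated[OF rX_space rX_space, of s t] by auto
  qed
  then obtain D where D: "D \<in> sets borel" "\<And>t. iM (M (rX t)) \<in> D \<longleftrightarrow> rX t \<in> A" by auto
  have "M x \<in> iM -` D \<inter> space MM \<longleftrightarrow> x \<in> A" if "x \<in> space X" for x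
    using D(2)[of "iX x"] iX(3)[OF that] measurable_space[OF M that] by simp
  moreover have "iM -` D \<inter> space MM \<in> sets MM" using measurable_sets[OF iM(1) D(1)] .
  ultimately show ?thesis by (intro bexI[of _ "iM -` D \<inter> space MM"] ballI)
qed

lemma measurable_factor_through:
  fixes f :: "'x \<Rightarrow> real"
  assumes rX: "measurable_retract X (borel :: real measure)"
    and rM: "measurable_retract MM (borel :: real measure)"
    and M: "M \<in> X \<rightarrow>\<^sub>M MM" and f: "f \<in> borel_measurable X"
    and const: "\<And>x y. x \<in> space X \<Longrightarrow> y \<in> space X \<Longrightarrow> M x = M y \<Longrightarrow> f x = f y"
  shows "\<exists>h\<in>borel_measurable MM. \<forall>x\<in>space X. f x = h (M x)"
proof -
  have "\<exists>D\<in>sets MM. \<forall>x\<in>space X. M x \<in> D \<longleftrightarrow> x \<in> {x \<in> space X. f x < of_rat c}" for c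
  proof (rule saturated_set_eq_vimage[OF rX rM M])
    show "{x \<in> space X. f x < of_rat c} \<in> sets X" using f by measurable
    fix x y assume "x \<in> space X" "y \<in> space X" "M x = M y" "x \<in> {x \<in> space X. f x < of_rat c}"
    then show "y \<in> {x \<in> space X. f x < of_rat c}" using const[of x y] by simp
  qed
  then have "\<exists>D. D \<in> sets MM \<and> (\<forall>x\<in>space X. M x \<in> D \<longleftrightarrow> f x < of_rat c)" for c by auto
  define D where "D c = (SOME D. D \<in> sets MM \<and> (\<forall>x\<in>space X. M x \<in> D \<longleftrightarrow> f x < of_rat c))" for c
  have D: "D c \<in> sets MM" "\<And>x. x \<in> space X \<Longrightarrow> M x \<in> D c \<longleftrightarrow> f x < of_rat c" for c
    using someI_ex[OF \<open>\<exists>D. _\<close>[of c]] unfolding D_def by auto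
  define H where "H m = (\<Sqinter>c::rat. if m \<in> D c then ereal (of_rat c) else \<infinity>)" for m
  have "H \<in> borel_measurable MM" unfolding H_def using D(1) by (intro borel_measurable_INF) auto
  then have "(\<lambda>m. real_of_ereal (H m)) \<in> borel_measurable MM" by measurable
  moreover have "f x = real_of_ereal (H (M x))" if "x \<in> space X" for x
  proof -
    have "H (M x) = (\<Sqinter>c::rat. if f x < of_rat c then ereal (of_rat c) else \<infinity>)"
      unfolding H_def using D(2)[OF that] by simp
    then show ?thesis unfolding INF_rat_greater by simp
  qed
  ultimately show ?thesis by (intro bexI[of _ "\<lambda>m. real_of_ereal (H m)"]) auto
qed

section \<open>Regular conditional distributions of real random variables\<close>

definition rat_above :: "real \<Rightarrow> nat \<Rightarrow> rat" where
  "rat_above t = rec_nat (SOME q. t < of_rat q \<and> of_rat q < t + 1)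
     (\<lambda>n q. SOME q'. t < of_rat q' \<and> of_rat q' < min (of_rat q) (t + 1 / real (Suc (Suc n))))"

lemma rat_above_Suc:
  "t < of_rat (rat_above t (Suc n)) \<and>
   of_rat (rat_above t (Suc n)) < min (of_rat (rat_above t n)) (t + 1 / real (Suc (Suc n)))"
  if "t < of_rat (rat_above t n)"
proof -
  have "t < min (of_rat (rat_above t n)) (t + 1 / real (Suc (Suc n)))" using that by simp
  then have "\<exists>q'. t < of_rat q' \<and> of_rat q' < min (of_rat (rat_above t n)) (t + 1 / real (Suc (Suc n)))"
    using of_rat_dense by blast
  from someI_ex[OF this] show ?thesis by (simp add: rat_above_def)
qed

lemma rat_above_bounds: "t < of_rat (rat_above t n) \<and> of_rat (rat_above t n) < t + 1 / real (Suc n)"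
proof (induction n)
  case 0
  have "\<exists>q. t < of_rat q \<and> of_rat q < t + 1" using of_rat_dense[of t "t + 1"] by auto
  from someI_ex[OF this] show ?case by (simp add: rat_above_def)
next
  case (Suc n)
  then show ?case using rat_above_Suc[of t n] by simp
qed

lemma rat_above_Suc_le: "rat_above t (Suc n) \<le> rat_above t n"
  using rat_above_Suc[of t n] rat_above_bounds[of t n] by (simp add: of_rat_less_eq less_imp_le of_rat_less)

lemma rat_above_LIMSEQ: "(\<lambda>n. real_of_rat (rat_above t n)) \<longlonglongrightarrow> t"
proof (rule tendsto_sandwich[of "\<lambda>n. t" _ _ "\<lambda>n. t + 1 / real (Suc n)"])
  show "\<forall>\<^sub>F n in sequentially. t \<le> of_rat (rat_above t n)"
    "\<forall>\<^sub>F n in sequentially. of_rat (rat_above t n) \<le> t + 1 / real (Suc n)"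
    using rat_above_bounds[of t] by (auto intro: always_eventually less_imp_le)
  show "(\<lambda>n. t + 1 / real (Suc n)) \<longlonglongrightarrow> t"
    using tendsto_add[OF tendsto_const[of t] LIMSEQ_Suc[OF lim_const_over_n[of 1]]] by simp
qed simp

lemma rat_above_tendsto_at_right: "filterlim (\<lambda>n. real_of_rat (rat_above t n)) (at_right t) sequentially"
  using rat_above_LIMSEQ rat_above_bounds
  by (intro tendsto_imp_filterlim_at_right) (auto intro: always_eventually)

lemma rat_above_eventually_less:
  assumes "t < of_rat c"
  shows "\<forall>\<^sub>F n in sequentially. rat_above t n < c"
  using order_tendstoD(2)[OF rat_above_LIMSEQ assms] by (simp add: of_rat_less)

definition cdf_family :: "(rat \<Rightarrow> 'm \<Rightarrow> real) \<Rightarrow> 'm \<Rightarrow> bool" where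
  "cdf_family h m \<longleftrightarrow> (\<forall>c c'. c \<le> c' \<longrightarrow> h c m \<le> h c' m) \<and> (\<forall>c. 0 \<le> h c m \<and> h c m \<le> 1) \<and>
     (\<forall>k::nat. \<exists>n::nat. 1 - 1 / real (Suc k) < h (of_nat n) m) \<and>
     (\<forall>k::nat. \<exists>n::nat. h (- of_nat n) m < 1 / real (Suc k))"

definition family_cdf :: "(rat \<Rightarrow> 'm \<Rightarrow> real) \<Rightarrow> 'm \<Rightarrow> real \<Rightarrow> real" where
  "family_cdf h m t = (INF c\<in>{c. t < of_rat c}. h c m)"

lemma rat_greater_nonempty: "{c::rat. (t::real) < of_rat c} \<noteq> {}"
  using of_rat_dense[of t "t + 1"] by auto

context
  fixes h :: "rat \<Rightarrow> 'm \<Rightarrow> real" and m :: 'm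
  assumes family: "cdf_family h m"
begin

lemma bdd_below_family: "bdd_below ((\<lambda>c. h c m) ` {c. (t::real) < of_rat c})"
  using family unfolding cdf_family_def by (intro bdd_belowI[of _ 0]) auto

lemma family_cdf_le: "t < of_rat c \<Longrightarrow> family_cdf h m t \<le> h c m"
  unfolding family_cdf_def by (rule cINF_lower[OF bdd_below_family]) auto

lemma family_cdf_ge: "of_rat c \<le> t \<Longrightarrow> h c m \<le> family_cdf h m t"
  unfolding family_cdf_def
proof (rule cINF_greatest[OF rat_greater_nonempty])
  fix c' assume "c' \<in> {c. t < of_rat c}" "of_rat c \<le> t"
  then have "of_rat c \<le> (of_rat c' :: real)" by simp
  then have "c \<le> c'" by (simp add: of_rat_less_eq)
  then show "h c m \<le> h c' m" using family unfolding cdf_family_def by blast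
qed

lemma family_cdf_nonneg: "0 \<le> family_cdf h m t"
  unfolding family_cdf_def using family unfolding cdf_family_def
  by (intro cINF_greatest[OF rat_greater_nonempty]) auto

lemma family_cdf_le_1: "family_cdf h m t \<le> 1"
proof -
  obtain c where "t < of_rat c" using rat_greater_nonempty by auto
  then show ?thesis using family_cdf_le family unfolding cdf_family_def by (meson order_trans)
qed

lemma family_cdf_mono: "t \<le> s \<Longrightarrow> family_cdf h m t \<le> family_cdf h m s"
  unfolding family_cdf_def[of _ _ s]
  by (rule cINF_greatest[OF rat_greater_nonempty]) (auto intro: family_cdf_le)

lemma family_cdf_less: "family_cdf h m t < a \<Longrightarrow> \<exists>c. t < of_rat c \<and> h c m < a"
  unfolding family_cdf_def
  using cInf_less_iff[OF _ bdd_below_family, of t a] rat_greater_nonempty[of t] by auto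

lemma family_LIMSEQ: "(\<lambda>n. h (rat_above t n) m) \<longlonglongrightarrow> family_cdf h m t"
proof (rule order_tendstoI)
  fix a assume "a < family_cdf h m t"
  then show "\<forall>\<^sub>F n in sequentially. a < h (rat_above t n) m"
    using family_cdf_le rat_above_bounds by (intro always_eventually allI) (meson less_le_trans)
next
  fix a assume "family_cdf h m t < a"
  then obtain c where c: "t < of_rat c" "h c m < a" using family_cdf_less by blast
  show "\<forall>\<^sub>F n in sequentially. h (rat_above t n) m < a"
    using rat_above_eventually_less[OF c(1)]
  proof (rule eventually_mono)
    fix n assume "rat_above t n < c"
    then have "h (rat_above t n) m \<le> h c m" using family unfolding cdf_family_def by simp
    then show "h (rat_above t n) m < a" using c(2) by simp
  qed
qed

lemma family_cdf_right_continuous: "continuous (at_right t) (family_cdf h m)"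
  unfolding continuous_within
proof (rule order_tendstoI)
  fix a assume "a < family_cdf h m t"
  then show "\<forall>\<^sub>F s in at_right t. a < family_cdf h m s"
    using family_cdf_mono eventually_at_right_less[of t] by (auto elim!: eventually_mono intro: less_le_trans)
next
  fix a assume "family_cdf h m t < a"
  then obtain c where c: "t < of_rat c" "h c m < a" using family_cdf_less by blast
  show "\<forall>\<^sub>F s in at_right t. family_cdf h m s < a"
    using eventually_at_right_real[OF c(1)]
  proof (rule eventually_mono)
    fix s assume "s \<in> {t<..<of_rat c}"
    then have "family_cdf h m s \<le> h c m" by (intro family_cdf_le) auto
    then show "family_cdf h m s < a" using c by simp
  qed
qed

lemma family_cdf_at_top: "(family_cdf h m \<longlongrightarrow> 1) at_top"
proof (rule order_tendstoI)
  fix a :: real assume "a < 1"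
  then obtain k where k: "1 / real (Suc k) < 1 - a"
    using reals_Archimedean[of "1 - a"] by (auto simp: inverse_eq_divide)
  obtain n :: nat where n: "1 - 1 / real (Suc k) < h (of_nat n) m"
    using family unfolding cdf_family_def by blast
  have "a < family_cdf h m s" if "real n \<le> s" for s
    using family_cdf_ge[of "of_nat n" s] that k n by simp
  then show "\<forall>\<^sub>F s in at_top. a < family_cdf h m s" unfolding eventually_at_top_linorder by blast
next
  fix a :: real assume "1 < a"
  then show "\<forall>\<^sub>F s in at_top. family_cdf h m s < a"
    using family_cdf_le_1 by (intro always_eventually allI) (meson le_less_trans)
qed

lemma family_cdf_at_bot: "(family_cdf h m \<longlongrightarrow> 0) at_bot"
proof (rule order_tendstoI)
  fix a :: real assume "a < 0"
  then show "\<forall>\<^sub>F s in at_bot. a < family_cdf h m s"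
    using family_cdf_nonneg by (intro always_eventually allI) (meson less_le_trans)
next
  fix a :: real assume "0 < a"
  then obtain k where k: "1 / real (Suc k) < a" using reals_Archimedean[of a] by (auto simp: inverse_eq_divide)
  obtain n :: nat where n: "h (- of_nat n) m < 1 / real (Suc k)"
    using family unfolding cdf_family_def by blast
  have "family_cdf h m s < a" if "s \<le> - real n - 1" for s
    using family_cdf_le[of s "- of_nat n"] that k n by (simp add: of_rat_minus)
  then show "\<forall>\<^sub>F s in at_bot. family_cdf h m s < a" unfolding eventually_at_bot_linorder by blast
qed

lemma real_distribution_family: "real_distribution (interval_measure (family_cdf h m))"
  using family_cdf_mono family_cdf_right_continuous family_cdf_at_bot family_cdf_at_top
  by (intro real_distribution_interval_measure) auto

lemma cdf_family_interval_measure: "cdf (interval_measure (family_cdf h m)) = family_cdf h m"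
  using family_cdf_mono family_cdf_right_continuous family_cdf_at_bot
  by (intro cdf_interval_measure) auto

end

text \<open>Off the measurable set where \<open>h\<close> is a \<^const>\<open>cdf_family\<close> the kernel is an arbitrary
  probability measure.\<close>

definition family_kernel :: "(rat \<Rightarrow> 'm \<Rightarrow> real) \<Rightarrow> 'm \<Rightarrow> real measure" where
  "family_kernel h m = (if cdf_family h m then interval_measure (family_cdf h m) else return borel 0)"

lemma emeasure_family_kernel_atMost:
  assumes "cdf_family h m"
  shows "emeasure (family_kernel h m) {..t} = ennreal (family_cdf h m t)"
proof -
  interpret real_distribution "interval_measure (family_cdf h m)"
    using real_distribution_family[OF assms] .
  have "prob {..t} = family_cdf h m t"
    using fun_cong[OF cdf_family_interval_measure[OF assms, unfolded cdf_def], of t] by simp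
  then show ?thesis using assms by (simp add: family_kernel_def emeasure_eq_measure)
qed

lemma measurable_family_kernel:
  assumes h: "\<And>c. h c \<in> borel_measurable MM"
  shows "family_kernel h \<in> MM \<rightarrow>\<^sub>M prob_algebra borel"
proof (rule measurable_prob_algebra_generated[where \<Omega>=UNIV and G="range atMost"])
  have "sets (sigma (UNIV :: real set) (range atMost)) = sigma_sets UNIV (range atMost)"
    by (rule sets_measure_of) auto
  then show "sets borel = sigma_sets UNIV (range (atMost :: real \<Rightarrow> real set))"
    by (metis borel_eq_atMost)
  show "Int_stable (range atMost :: real set set)" by (auto simp: Int_stable_def)
  show "range atMost \<subseteq> Pow (UNIV :: real set)" by auto
  fix m assume "m \<in> space MM"
  show "prob_space (family_kernel h m)"
    unfolding family_kernel_def using real_distribution_family[of h m]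
    by (auto simp: real_distribution_def prob_space_return)
  show "sets (family_kernel h m) = sets borel" unfolding family_kernel_def by simp
next
  fix A :: "real set" assume "A \<in> range atMost"
  then obtain t where A: "A = {..t}" by auto
  define G where "G = {m \<in> space MM. cdf_family h m}"
  have G: "G \<in> sets MM" unfolding G_def cdf_family_def using h by measurable
  have "(\<lambda>n. if m \<in> G then h (rat_above t n) m else 0) \<longlonglongrightarrow> (if m \<in> G then family_cdf h m t else 0)"
    for m using family_LIMSEQ[of h m t] unfolding G_def by auto
  then have "(\<lambda>m. if m \<in> G then family_cdf h m t else 0) \<in> borel_measurable MM"
    by (rule borel_measurable_LIMSEQ_real) (use h G in measurable)
  then have "(\<lambda>m. ennreal (if m \<in> G then family_cdf h m t else 0)) \<in> borel_measurable MM"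
    by measurable
  then have "(\<lambda>m. if m \<in> G then ennreal (if m \<in> G then family_cdf h m t else 0)
      else emeasure (return borel (0::real)) {..t}) \<in> borel_measurable MM"
    using G by (intro measurable_If_set) (auto simp: G_def Int_absorb2)
  then have "(\<lambda>m. if m \<in> G then ennreal (family_cdf h m t) else emeasure (return borel (0::real)) {..t})
      \<in> borel_measurable MM"
    by (rule measurable_cong[THEN iffD1, rotated]) simp
  moreover have "emeasure (family_kernel h m) A
      = (if m \<in> G then ennreal (family_cdf h m t) else emeasure (return borel (0::real)) {..t})"
    if "m \<in> space MM" for m
    using that emeasure_family_kernel_atMost[of h m t] unfolding A G_def by (auto simp: family_kernel_def)
  ultimately show "(\<lambda>m. emeasure (family_kernel h m) A) \<in> borel_measurable MM"
    by (simp cong: measurable_cong)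
qed

lemma cdf_family_cdf:
  assumes "real_distribution N" and h: "\<And>c. h c m = cdf N (of_rat c)"
  shows "cdf_family h m"
proof -
  interpret real_distribution N by fact
  show ?thesis
    unfolding cdf_family_def
  proof (intro conjI allI impI)
    fix c c' :: rat assume "c \<le> c'"
    then show "h c m \<le> h c' m" unfolding h by (intro cdf_nondecreasing) (simp add: of_rat_less_eq)
  next
    fix c show "0 \<le> h c m" "h c m \<le> 1" unfolding h by (rule cdf_nonneg, rule cdf_bounded_prob)
  next
    fix k :: nat
    have "1 - 1 / real (Suc k) < 1" by simp
    from order_tendstoD(1)[OF cdf_lim_infty_prob this]
    obtain n where "1 - 1 / real (Suc k) < cdf N (real n)" by (auto simp: eventually_sequentially)
    then show "\<exists>n::nat. 1 - 1 / real (Suc k) < h (of_nat n) m" unfolding h by (intro exI[of _ n]) simp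
  next
    fix k :: nat
    have "0 < 1 / real (Suc k)" by simp
    from order_tendstoD(2)[OF cdf_lim_neg_infty this]
    obtain n where "cdf N (- real n) < 1 / real (Suc k)" by (auto simp: eventually_sequentially)
    then show "\<exists>n::nat. h (- of_nat n) m < 1 / real (Suc k)"
      unfolding h by (intro exI[of _ n]) (simp add: of_rat_minus)
  qed
qed

lemma family_kernel_cdf:
  assumes N: "real_distribution N" and h: "\<And>c. h c m = cdf N (of_rat c)"
  shows "family_kernel h m = N"
proof -
  interpret real_distribution N by (rule N)
  have family: "cdf_family h m" using N h by (rule cdf_family_cdf)
  have "family_cdf h m t = cdf N t" for t
  proof -
    have "(cdf N \<longlongrightarrow> cdf N t) (at_right t)" using cdf_is_right_cont[of t] by (simp add: continuous_within)
    then have "(\<lambda>n. h (rat_above t n) m) \<longlonglongrightarrow> cdf N t"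
      unfolding h using filterlim_compose[OF _ rat_above_tendsto_at_right] by blast
    then show ?thesis using family_LIMSEQ[OF family, of t] LIMSEQ_unique by blast
  qed
  then have "cdf (family_kernel h m) = cdf N"
    using cdf_family_interval_measure[OF family] family by (auto simp: family_kernel_def)
  moreover have "real_distribution (family_kernel h m)"
    using real_distribution_family[OF family] family by (simp add: family_kernel_def)
  ultimately show ?thesis using cdf_unique N by blast
qed

lemma AE_le_of_nn_integral_indicator_le:
  fixes f g :: "'a \<Rightarrow> ennreal"
  assumes borel: "f \<in> borel_measurable M" "g \<in> borel_measurable M"
    and g_fin: "integral\<^sup>N M g \<noteq> \<infinity>"
    and le: "\<And>A. A \<in> sets M \<Longrightarrow> (\<integral>\<^sup>+x. f x * indicator A x \<partial>M) \<le> (\<integral>\<^sup>+x. g x * indicator A x \<partial>M)"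
  shows "AE x in M. f x \<le> g x"
proof -
  let ?P = "\<lambda>f A. \<integral>\<^sup>+ x. f x * indicator A x \<partial>M"
  let ?N = "{x\<in>space M. g x < f x}"
  have N: "?N \<in> sets M" using borel by simp
  have "?P g ?N \<le> integral\<^sup>N M g" by (intro nn_integral_mono) (auto split: split_indicator)
  then have Pg_fin: "?P g ?N < \<top>" using g_fin by (auto simp: top_unique less_top)
  have "?P (\<lambda>x. f x - g x) ?N = (\<integral>\<^sup>+x. f x * indicator ?N x - g x * indicator ?N x \<partial>M)"
    by (auto intro!: nn_integral_cong simp: indicator_def)
  also have "\<dots> = ?P f ?N - ?P g ?N"
  proof (rule nn_integral_diff)
    show "(\<lambda>x. f x * indicator ?N x) \<in> borel_measurable M" "(\<lambda>x. g x * indicator ?N x) \<in> borel_measurable M"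
      using borel N by auto
    show "AE x in M. g x * indicator ?N x \<le> f x * indicator ?N x"
      by (auto split: split_indicator)
  qed (use Pg_fin in auto)
  also have "\<dots> = 0"
  proof -
    have "?P f ?N < \<top>" using le[OF N] Pg_fin by (rule le_less_trans)
    then show ?thesis using le[OF N] by (simp add: diff_eq_0_iff_ennreal)
  qed
  finally have "AE x in M. (f x - g x) * indicator ?N x = 0"
    using borel N by (subst (asm) nn_integral_0_iff_AE) auto
  with AE_space show ?thesis
  proof (eventually_elim)
    case (elim x)
    show "f x \<le> g x"
    proof (cases "g x < f x")
      case True
      then have "f x - g x = 0" using elim by (simp add: indicator_def)
      then show ?thesis by (rule ennreal_minus_eq_0)
    qed (simp add: not_less)
  qed
qed

lemma ennreal_LIMSEQ_decreasing_eq_INF: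
  fixes x :: "nat \<Rightarrow> real"
  assumes "\<And>n. x (Suc n) \<le> x n" "x \<longlonglongrightarrow> L" "\<And>n. 0 \<le> x n"
  shows "ennreal L = (INF n. ennreal (x n))"
proof -
  have "decseq x" using assms(1) by (simp add: decseq_Suc_iff)
  then have "antimono_on UNIV (\<lambda>n. ennreal (x n))"
    by (intro monotone_onI ennreal_leI) (simp add: decseq_def)
  then have "(\<lambda>n. ennreal (x n)) \<longlonglongrightarrow> (INF n. ennreal (x n))" by (rule LIMSEQ_INF)
  moreover have "(\<lambda>n. ennreal (x n)) \<longlonglongrightarrow> ennreal L" using assms(2) by (rule tendsto_ennrealI)
  ultimately show ?thesis using LIMSEQ_unique by blast
qed

lemma emeasure_density_indicator:
  assumes "S \<in> sets M" "B \<in> sets M"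
  shows "emeasure (density M (indicator S)) B = emeasure M (S \<inter> B)"
proof -
  have "emeasure (density M (indicator S)) B = (\<integral>\<^sup>+x. indicator (S \<inter> B) x \<partial>M)"
    using assms by (simp add: emeasure_density indicator_inter_arith)
  then show ?thesis using assms by simp
qed

lemma INT_le_rat_above: "(\<Inter>n. {x \<in> S. f x \<le> of_rat (rat_above t n)}) = {x \<in> S. f x \<le> t}"
proof (intro equalityI subsetI)
  fix x assume x: "x \<in> (\<Inter>n. {x \<in> S. f x \<le> of_rat (rat_above t n)})"
  have "f x \<le> t"
  proof (rule ccontr)
    assume "\<not> f x \<le> t"
    then obtain n where n: "1 / real (Suc n) < f x - t"
      using reals_Archimedean[of "f x - t"] by (auto simp: inverse_eq_divide)
    have "f x \<le> of_rat (rat_above t n)" using x by blast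
    then show False using n rat_above_bounds[of t n] by linarith
  qed
  then show "x \<in> {x \<in> S. f x \<le> t}" using x by auto
next
  fix x assume "x \<in> {x \<in> S. f x \<le> t}"
  then show "x \<in> (\<Inter>n. {x \<in> S. f x \<le> of_rat (rat_above t n)})"
    using rat_above_bounds[of t] by (auto intro: order_trans less_imp_le)
qed

subsection \<open>Disintegration along a real random variable\<close>

locale real_disintegration =
  fixes P :: "'a measure" and MM :: "'m measure" and W :: "'a \<Rightarrow> 'm" and T :: "'a \<Rightarrow> real"
  assumes prob_space_P: "prob_space P" and W: "W \<in> P \<rightarrow>\<^sub>M MM" and T: "T \<in> borel_measurable P"
begin

definition law :: "'m measure" where
  "law = distr P MM W"

definition law_below :: "rat \<Rightarrow> 'm measure" where
  "law_below c = distr (density P (indicator {\<omega>\<in>space P. T \<omega> \<le> of_rat c})) MM W"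

text \<open>\<open>cdf_density c m\<close> is a version of \<open>P(T \<le> c | W = m)\<close>.\<close>

definition cdf_density :: "rat \<Rightarrow> 'm \<Rightarrow> ennreal" where
  "cdf_density c = RN_deriv law (law_below c)"

definition cond_kernel :: "'m \<Rightarrow> real measure" where
  "cond_kernel = family_kernel (\<lambda>c m. enn2real (cdf_density c m))"

lemma prob_space_law: "prob_space law"
  unfolding law_def using prob_space_P W by (intro prob_space.prob_space_distr) auto

lemma sets_law [simp, measurable_cong]: "sets law = sets MM"
  and space_law [simp]: "space law = space MM"
  unfolding law_def by auto

lemma emeasure_P_finite: "emeasure P S \<noteq> \<infinity>"
  using prob_space.emeasure_le_1[OF prob_space_P, of S] by (auto simp: top_unique)

lemma sets_W_in: "A \<in> sets MM \<Longrightarrow> {\<omega>\<in>space P. W \<omega> \<in> A} \<in> sets P"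
  using measurable_sets[OF W] by (simp add: vimage_def Int_def conj_commute)

lemma sets_W_in_T_le: "A \<in> sets MM \<Longrightarrow> {\<omega>\<in>space P. W \<omega> \<in> A \<and> T \<omega> \<le> x} \<in> sets P"
proof -
  assume "A \<in> sets MM"
  moreover have "{\<omega>\<in>space P. T \<omega> \<le> x} \<in> sets P" using T by measurable
  moreover have "{\<omega>\<in>space P. W \<omega> \<in> A \<and> T \<omega> \<le> x} = {\<omega>\<in>space P. W \<omega> \<in> A} \<inter> {\<omega>\<in>space P. T \<omega> \<le> x}"
    by auto
  ultimately show ?thesis using sets_W_in by auto
qed

lemma emeasure_law: "A \<in> sets MM \<Longrightarrow> emeasure law A = emeasure P {\<omega>\<in>space P. W \<omega> \<in> A}"
  unfolding law_def using W by (subst emeasure_distr) (auto simp: vimage_def Int_def conj_commute)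

lemma sets_law_below [simp]: "sets (law_below c) = sets MM"
  unfolding law_below_def by simp

lemma emeasure_law_below:
  assumes A: "A \<in> sets MM"
  shows "emeasure (law_below c) A = emeasure P {\<omega>\<in>space P. W \<omega> \<in> A \<and> T \<omega> \<le> of_rat c}"
proof -
  have T_le: "{\<omega>\<in>space P. T \<omega> \<le> of_rat c} \<in> sets P" using T by measurable
  have "emeasure (law_below c) A
      = emeasure (density P (indicator {\<omega>\<in>space P. T \<omega> \<le> of_rat c})) (W -` A \<inter> space P)"
    unfolding law_below_def using W A by (subst emeasure_distr) auto
  also have "\<dots> = emeasure P ({\<omega>\<in>space P. T \<omega> \<le> of_rat c} \<inter> (W -` A \<inter> space P))"
    using A W T_le by (intro emeasure_density_indicator) auto
  also have "{\<omega>\<in>space P. T \<omega> \<le> of_rat c} \<inter> (W -` A \<inter> space P) = {\<omega>\<in>space P. W \<omega> \<in> A \<and> T \<omega> \<le> of_rat c}"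
    by auto
  finally show ?thesis .
qed

lemma density_cdf_density: "density law (cdf_density c) = law_below c"
  unfolding cdf_density_def
proof (rule sigma_finite_measure.density_RN_deriv)
  interpret prob_space law by (rule prob_space_law)
  show "sigma_finite_measure law" by unfold_locales
  show "absolutely_continuous law (law_below c)"
    unfolding absolutely_continuous_def
  proof
    fix A assume "A \<in> null_sets law"
    then have A: "A \<in> sets MM" "emeasure law A = 0" by auto
    have "emeasure (law_below c) A \<le> emeasure law A"
      unfolding emeasure_law_below[OF A(1)] emeasure_law[OF A(1)]
      using sets_W_in[OF A(1)] by (intro emeasure_mono) auto
    then show "A \<in> null_sets (law_below c)" using A by (auto simp: null_sets_def)
  qed
qed simp

lemma borel_measurable_cdf_density [measurable]: "cdf_density c \<in> borel_measurable MM"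
  using borel_measurable_RN_deriv[of law "law_below c"] unfolding cdf_density_def by simp

lemma nn_integral_cdf_density:
  assumes "A \<in> sets MM"
  shows "(\<integral>\<^sup>+m. cdf_density c m * indicator A m \<partial>law) = emeasure P {\<omega>\<in>space P. W \<omega> \<in> A \<and> T \<omega> \<le> of_rat c}"
  using assms by (simp add: emeasure_density[symmetric] density_cdf_density emeasure_law_below)

lemma nn_integral_cdf_density_space:
  "(\<integral>\<^sup>+m. cdf_density c m \<partial>law) = emeasure P {\<omega>\<in>space P. T \<omega> \<le> of_rat c}"
proof -
  have "(\<integral>\<^sup>+m. cdf_density c m \<partial>law) = (\<integral>\<^sup>+m. cdf_density c m * indicator (space MM) m \<partial>law)"
    by (intro nn_integral_cong) simp
  also have "\<dots> = emeasure P {\<omega>\<in>space P. W \<omega> \<in> space MM \<and> T \<omega> \<le> of_rat c}"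
    by (rule nn_integral_cdf_density) simp
  also have "{\<omega>\<in>space P. W \<omega> \<in> space MM \<and> T \<omega> \<le> of_rat c} = {\<omega>\<in>space P. T \<omega> \<le> of_rat c}"
    using measurable_space[OF W] by auto
  finally show ?thesis .
qed

lemma AE_cdf_density_le_1: "AE m in law. cdf_density c m \<le> 1"
proof (rule AE_le_of_nn_integral_indicator_le)
  interpret prob_space law by (rule prob_space_law)
  show "integral\<^sup>N law (\<lambda>_. 1) \<noteq> \<infinity>" by simp
  fix A assume "A \<in> sets law"
  then have A: "A \<in> sets MM" by simp
  show "(\<integral>\<^sup>+m. cdf_density c m * indicator A m \<partial>law) \<le> (\<integral>\<^sup>+m. 1 * indicator A m \<partial>law)"
    unfolding nn_integral_cdf_density[OF A] using A sets_W_in[OF A]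
    by (simp add: emeasure_law) (intro emeasure_mono; auto)
qed simp_all

lemma AE_cdf_density_mono:
  assumes "c \<le> c'"
  shows "AE m in law. cdf_density c m \<le> cdf_density c' m"
proof (rule AE_le_of_nn_integral_indicator_le)
  show "integral\<^sup>N law (cdf_density c') \<noteq> \<infinity>"
    unfolding nn_integral_cdf_density_space by (rule emeasure_P_finite)
  fix A assume "A \<in> sets law"
  then have A: "A \<in> sets MM" by simp
  have "(of_rat c :: real) \<le> of_rat c'" using assms by (simp add: of_rat_less_eq)
  then show "(\<integral>\<^sup>+m. cdf_density c m * indicator A m \<partial>law) \<le> (\<integral>\<^sup>+m. cdf_density c' m * indicator A m \<partial>law)"
    unfolding nn_integral_cdf_density[OF A] using sets_W_in_T_le[OF A] by (intro emeasure_mono) auto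
qed simp_all

lemma AE_cdf_density_SUP: "AE m in law. (SUP n::nat. cdf_density (of_nat n) m) = 1"
proof -
  interpret law: prob_space law by (rule prob_space_law)
  have "(\<integral>\<^sup>+m. (SUP n::nat. cdf_density (of_nat n) m) * indicator A m \<partial>law) = (\<integral>\<^sup>+m. 1 * indicator A m \<partial>law)"
    if A: "A \<in> sets MM" for A
  proof -
    have "(\<integral>\<^sup>+m. (SUP n::nat. cdf_density (of_nat n) m) * indicator A m \<partial>law)
        = (\<integral>\<^sup>+m. (SUP n::nat. cdf_density (of_nat n) m * indicator A m) \<partial>law)"
      by (intro nn_integral_cong) (simp split: split_indicator)
    also have "\<dots> = (SUP n::nat. \<integral>\<^sup>+m. cdf_density (of_nat n) m * indicator A m \<partial>law)"
    proof (rule nn_integral_monotone_convergence_SUP_AE)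
      fix n :: nat
      show "AE m in law. cdf_density (of_nat n) m * indicator A m \<le> cdf_density (of_nat (Suc n)) m * indicator A m"
        using AE_cdf_density_mono[of "of_nat n" "of_nat (Suc n)"]
        by (rule eventually_mono) (auto intro: mult_right_mono)
    qed (use A in measurable)
    also have "\<dots> = (SUP n::nat. emeasure P {\<omega>\<in>space P. W \<omega> \<in> A \<and> T \<omega> \<le> real n})"
      using nn_integral_cdf_density[OF A] by simp
    also have "\<dots> = emeasure P (\<Union>n. {\<omega>\<in>space P. W \<omega> \<in> A \<and> T \<omega> \<le> real n})"
    proof (rule SUP_emeasure_incseq)
      show "range (\<lambda>n. {\<omega>\<in>space P. W \<omega> \<in> A \<and> T \<omega> \<le> real n}) \<subseteq> sets P"
        using sets_W_in_T_le[OF A] by auto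
      show "incseq (\<lambda>n. {\<omega>\<in>space P. W \<omega> \<in> A \<and> T \<omega> \<le> real n})"
        by (intro monoI) (auto intro: order_trans)
    qed
    also have "(\<Union>n. {\<omega>\<in>space P. W \<omega> \<in> A \<and> T \<omega> \<le> real n}) = {\<omega>\<in>space P. W \<omega> \<in> A}"
      using real_arch_simple by blast
    finally show ?thesis using A by (simp add: emeasure_law)
  qed
  then show ?thesis by (intro law.density_unique_finite_measure) auto
qed

lemma AE_cdf_density_INF: "AE m in law. (INF n::nat. cdf_density (- of_nat n) m) = 0"
proof -
  have "(\<integral>\<^sup>+m. (INF n::nat. cdf_density (- of_nat n) m) \<partial>law)
      = (INF n::nat. \<integral>\<^sup>+m. cdf_density (- of_nat n) m \<partial>law)"
  proof (rule nn_integral_monotone_convergence_INF_AE)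
    fix n :: nat
    show "AE m in law. cdf_density (- of_nat (Suc n)) m \<le> cdf_density (- of_nat n) m"
      by (rule AE_cdf_density_mono) simp
    show "(\<integral>\<^sup>+m. cdf_density (- of_nat 0) m \<partial>law) < \<infinity>"
      unfolding nn_integral_cdf_density_space using emeasure_P_finite by (simp add: less_top)
  qed simp
  also have "\<dots> = (INF n::nat. emeasure P {\<omega>\<in>space P. T \<omega> \<le> - real n})"
    unfolding nn_integral_cdf_density_space by (simp add: of_rat_minus)
  also have "\<dots> = emeasure P (\<Inter>n. {\<omega>\<in>space P. T \<omega> \<le> - real n})"
  proof (rule INF_emeasure_decseq)
    show "range (\<lambda>n. {\<omega>\<in>space P. T \<omega> \<le> - real n}) \<subseteq> sets P" using T by auto
    show "antimono_on UNIV (\<lambda>n. {\<omega>\<in>space P. T \<omega> \<le> - real n})"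
      by (intro monotone_onI) (auto intro: order_trans)
  qed (rule emeasure_P_finite)
  also have "(\<Inter>n. {\<omega>\<in>space P. T \<omega> \<le> - real n}) = {}"
  proof (rule ccontr)
    assume "(\<Inter>n. {\<omega>\<in>space P. T \<omega> \<le> - real n}) \<noteq> {}"
    then obtain \<omega> where below: "\<And>n. T \<omega> \<le> - real n" by blast
    obtain n where "- T \<omega> \<le> real n" using real_arch_simple by blast
    then show False using below[of "Suc n"] by simp
  qed
  finally have "(\<integral>\<^sup>+m. (INF n::nat. cdf_density (- of_nat n) m) \<partial>law) = 0" by simp
  then show ?thesis by (subst (asm) nn_integral_0_iff_AE) auto
qed

lemma AE_cdf_density_le_1_all: "AE m in law. \<forall>c. cdf_density c m \<le> 1"
  using AE_cdf_density_le_1 by (simp add: AE_all_countable)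

lemma AE_cdf_family: "AE m in law. cdf_family (\<lambda>c m. enn2real (cdf_density c m)) m"
proof -
  have "AE m in law. c \<le> c' \<longrightarrow> cdf_density c m \<le> cdf_density c' m" for c c' :: rat
    using AE_cdf_density_mono[of c c'] by (cases "c \<le> c'") auto
  then have "AE m in law. \<forall>c c'::rat. c \<le> c' \<longrightarrow> cdf_density c m \<le> cdf_density c' m"
    by (simp add: AE_all_countable)
  with AE_cdf_density_le_1_all show ?thesis
    using AE_cdf_density_SUP AE_cdf_density_INF
  proof (eventually_elim)
    case (elim m)
    have fin: "cdf_density c m = ennreal (enn2real (cdf_density c m))" for c
    proof -
      have "cdf_density c m \<noteq> \<top>" using elim(1)[rule_format, of c] by (auto simp: top_unique)
      then show ?thesis by (simp add: ennreal_enn2real less_top)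
    qed
    show "cdf_family (\<lambda>c m. enn2real (cdf_density c m)) m"
      unfolding cdf_family_def
    proof (intro conjI allI impI)
      fix c c' :: rat assume "c \<le> c'"
      then show "enn2real (cdf_density c m) \<le> enn2real (cdf_density c' m)"
        using elim(1)[rule_format, of c'] elim(2)
        by (intro enn2real_mono) (auto simp: top_unique less_top[symmetric])
    next
      fix c :: rat
      show "0 \<le> enn2real (cdf_density c m)" by simp
      show "enn2real (cdf_density c m) \<le> 1" using elim(1) enn2real_mono[of "cdf_density c m" 1] by simp
    next
      fix k :: nat
      have "ennreal (1 - 1 / real (Suc k)) < (SUP n::nat. cdf_density (of_nat n) m)"
        using elim(3) by (simp add: ennreal_lessI)
      then obtain n :: nat where "ennreal (1 - 1 / real (Suc k)) < cdf_density (of_nat n) m"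
        by (auto simp: less_SUP_iff)
      then show "\<exists>n::nat. 1 - 1 / real (Suc k) < enn2real (cdf_density (of_nat n) m)"
        by (subst (asm) fin) (auto simp: ennreal_less_iff)
    next
      fix k :: nat
      have "(INF n::nat. cdf_density (- of_nat n) m) < ennreal (1 / real (Suc k))" using elim(4) by simp
      then obtain n :: nat where "cdf_density (- of_nat n) m < ennreal (1 / real (Suc k))"
        by (auto simp: INF_less_iff)
      then show "\<exists>n::nat. enn2real (cdf_density (- of_nat n) m) < 1 / real (Suc k)"
        by (subst (asm) fin) (auto simp: ennreal_less_iff)
    qed
  qed
qed

lemma measurable_cond_kernel: "cond_kernel \<in> MM \<rightarrow>\<^sub>M prob_algebra borel"
  unfolding cond_kernel_def by (rule measurable_family_kernel) measurable

lemma AE_cond_kernel_atMost: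
  "AE m in law. emeasure (cond_kernel m) {..t} = (INF n. cdf_density (rat_above t n) m)"
  using AE_cdf_family AE_cdf_density_le_1_all
proof (eventually_elim)
  case (elim m)
  let ?h = "\<lambda>c m. enn2real (cdf_density c m)"
  have fin: "cdf_density c m = ennreal (?h c m)" for c
  proof -
    have "cdf_density c m \<noteq> \<top>" using elim(2)[rule_format, of c] by (auto simp: top_unique)
    then show ?thesis by (simp add: ennreal_enn2real less_top)
  qed
  have "emeasure (cond_kernel m) {..t} = ennreal (family_cdf ?h m t)"
    unfolding cond_kernel_def by (rule emeasure_family_kernel_atMost[OF elim(1)])
  also have "\<dots> = (INF n. ennreal (?h (rat_above t n) m))"
    using elim(1) rat_above_Suc_le family_LIMSEQ[OF elim(1)] unfolding cdf_family_def
    by (intro ennreal_LIMSEQ_decreasing_eq_INF) auto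
  finally show ?case using fin by simp
qed

lemma nn_integral_cond_kernel_atMost:
  assumes A: "A \<in> sets MM"
  shows "(\<integral>\<^sup>+m. indicator A m * emeasure (cond_kernel m) {..t} \<partial>law)
    = emeasure P {\<omega>\<in>space P. W \<omega> \<in> A \<and> T \<omega> \<le> t}"
proof -
  have "(\<integral>\<^sup>+m. indicator A m * emeasure (cond_kernel m) {..t} \<partial>law)
      = (\<integral>\<^sup>+m. (INF n. cdf_density (rat_above t n) m * indicator A m) \<partial>law)"
    by (intro nn_integral_cong_AE, rule eventually_mono[OF AE_cond_kernel_atMost[of t]])
      (simp split: split_indicator)
  also have "\<dots> = (INF n. \<integral>\<^sup>+m. cdf_density (rat_above t n) m * indicator A m \<partial>law)"
  proof (rule nn_integral_monotone_convergence_INF_AE)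
    fix n
    show "AE m in law. cdf_density (rat_above t (Suc n)) m * indicator A m
        \<le> cdf_density (rat_above t n) m * indicator A m"
      using AE_cdf_density_mono[OF rat_above_Suc_le[of t n]]
      by (rule eventually_mono) (auto intro: mult_right_mono)
    show "(\<integral>\<^sup>+m. cdf_density (rat_above t 0) m * indicator A m \<partial>law) < \<infinity>"
      unfolding nn_integral_cdf_density[OF A] using emeasure_P_finite by (simp add: less_top)
  qed (use A in measurable)
  also have "\<dots> = (INF n. emeasure P {\<omega>\<in>space P. W \<omega> \<in> A \<and> T \<omega> \<le> of_rat (rat_above t n)})"
    unfolding nn_integral_cdf_density[OF A] ..
  also have "\<dots> = emeasure P (\<Inter>n. {\<omega>\<in>space P. W \<omega> \<in> A \<and> T \<omega> \<le> of_rat (rat_above t n)})"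
  proof (rule INF_emeasure_decseq)
    show "range (\<lambda>n. {\<omega>\<in>space P. W \<omega> \<in> A \<and> T \<omega> \<le> of_rat (rat_above t n)}) \<subseteq> sets P"
      using sets_W_in_T_le[OF A] by auto
    have "(of_rat (rat_above t (Suc n)) :: real) \<le> of_rat (rat_above t n)" for n
      using rat_above_Suc_le by (simp add: of_rat_less_eq)
    then have "decseq (\<lambda>n. {\<omega>\<in>space P. W \<omega> \<in> A \<and> T \<omega> \<le> of_rat (rat_above t n)})"
      by (intro decseq_SucI) (auto intro: order_trans)
    then show "antimono_on UNIV (\<lambda>n. {\<omega>\<in>space P. W \<omega> \<in> A \<and> T \<omega> \<le> of_rat (rat_above t n)})"
      by (simp add: decseq_def monotone_on_def)
  qed (rule emeasure_P_finite)
  also have "(\<Inter>n. {\<omega>\<in>space P. W \<omega> \<in> A \<and> T \<omega> \<le> of_rat (rat_above t n)})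
      = {\<omega>\<in>space P. W \<omega> \<in> A \<and> T \<omega> \<le> t}"
    using INT_le_rat_above[of "{\<omega>\<in>space P. W \<omega> \<in> A}" T t] by simp
  finally show ?thesis .
qed

end

context real_disintegration
begin

lemma emeasure_distr_T_restricted:
  assumes A: "A \<in> sets MM" and B: "B \<in> sets borel"
  shows "emeasure (distr (density P (indicator {\<omega>\<in>space P. W \<omega> \<in> A})) borel T) B
    = emeasure P {\<omega>\<in>space P. W \<omega> \<in> A \<and> T \<omega> \<in> B}"
proof -
  have "emeasure (distr (density P (indicator {\<omega>\<in>space P. W \<omega> \<in> A})) borel T) B
      = emeasure (density P (indicator {\<omega>\<in>space P. W \<omega> \<in> A})) (T -` B \<inter> space P)"
    using T B by (subst emeasure_distr) auto
  also have "\<dots> = emeasure P ({\<omega>\<in>space P. W \<omega> \<in> A} \<inter> (T -` B \<inter> space P))"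
    using sets_W_in[OF A] measurable_sets[OF T B] by (intro emeasure_density_indicator)
  also have "{\<omega>\<in>space P. W \<omega> \<in> A} \<inter> (T -` B \<inter> space P) = {\<omega>\<in>space P. W \<omega> \<in> A \<and> T \<omega> \<in> B}"
    by auto
  finally show ?thesis .
qed

lemma emeasure_bind_cond_kernel:
  assumes A: "A \<in> sets MM" and B: "B \<in> sets borel"
  shows "emeasure (density law (indicator A) \<bind> cond_kernel) B
    = (\<integral>\<^sup>+x. indicator A x * emeasure (cond_kernel x) B \<partial>law)"
proof -
  have kernel: "cond_kernel \<in> density law (indicator A) \<rightarrow>\<^sub>M subprob_algebra borel"
    using measurable_prob_algebraD[OF measurable_cond_kernel] by simp
  have "space (density law (indicator A)) \<noteq> {}"
    using prob_space.not_empty[OF prob_space_law] by simp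
  then have "emeasure (density law (indicator A) \<bind> cond_kernel) B
      = (\<integral>\<^sup>+x. emeasure (cond_kernel x) B \<partial>density law (indicator A))"
    using kernel B by (rule emeasure_bind)
  also have "\<dots> = (\<integral>\<^sup>+x. indicator A x * emeasure (cond_kernel x) B \<partial>law)"
    using A measurable_emeasure_subprob_algebra[OF B] measurable_prob_algebraD[OF measurable_cond_kernel]
    by (intro nn_integral_density) (auto intro: measurable_compose)
  finally show ?thesis .
qed

theorem cond_distr_cond_kernel: "cond_distr P MM borel W T cond_kernel"
  unfolding cond_distr_def law_def[symmetric]
proof (intro conjI ballI measurable_cond_kernel)
  fix A B assume A: "A \<in> sets MM" and B: "B \<in> sets (borel :: real measure)"
  let ?\<mu>1 = "distr (density P (indicator {\<omega>\<in>space P. W \<omega> \<in> A})) borel T"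
  let ?\<mu>2 = "density law (indicator A) \<bind> cond_kernel"
  have sets_kernel: "sets (cond_kernel m) = sets borel" if "m \<in> space (density law (indicator A))" for m
    using measurable_space[OF measurable_cond_kernel, of m] that by (simp add: space_prob_algebra)
  have "finite_borel_measure ?\<mu>1"
    using emeasure_distr_T_restricted[OF A, of UNIV] emeasure_P_finite
    by (auto intro!: finite_measureI simp: finite_borel_measure_def finite_borel_measure_axioms_def)
  moreover have "finite_borel_measure ?\<mu>2"
  proof -
    have "sets ?\<mu>2 = sets borel"
      using prob_space.not_empty[OF prob_space_law]
      by (intro sets_bind[where f = cond_kernel, OF sets_kernel]) simp_all
    moreover have "emeasure ?\<mu>2 UNIV = (\<integral>\<^sup>+x. indicator A x * emeasure (cond_kernel x) UNIV \<partial>law)"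
      using emeasure_bind_cond_kernel[OF A, of UNIV] by simp
    moreover have "\<dots> \<le> (\<integral>\<^sup>+x. 1 \<partial>law)"
      using measurable_space[OF measurable_cond_kernel]
      by (intro nn_integral_mono) (auto simp: space_prob_algebra prob_space.emeasure_le_1
          split: split_indicator)
    ultimately show ?thesis
      using prob_space.emeasure_space_1[OF prob_space_law] sets_eq_imp_space_eq[of ?\<mu>2 borel]
      by (auto intro!: finite_measureI simp: finite_borel_measure_def finite_borel_measure_axioms_def
          top_unique)
  qed
  moreover have "cdf ?\<mu>1 = cdf ?\<mu>2"
  proof
    fix t
    have "emeasure ?\<mu>1 {..t} = emeasure ?\<mu>2 {..t}"
      using emeasure_distr_T_restricted[OF A, of "{..t}"] emeasure_bind_cond_kernel[OF A, of "{..t}"]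
        nn_integral_cond_kernel_atMost[OF A, of t] by simp
    then show "cdf ?\<mu>1 t = cdf ?\<mu>2 t" unfolding cdf_def by (simp add: measure_def)
  qed
  ultimately have "?\<mu>1 = ?\<mu>2" by (rule cdf_unique')
  then show "emeasure P {\<omega>\<in>space P. W \<omega> \<in> A \<and> T \<omega> \<in> B}
      = (\<integral>\<^sup>+x. indicator A x * emeasure (cond_kernel x) B \<partial>law)"
    using emeasure_distr_T_restricted[OF A B] emeasure_bind_cond_kernel[OF A B] by simp
qed

end

lemma cond_distr_real_exists:
  fixes T :: "'a \<Rightarrow> real"
  assumes "prob_space P" "W \<in> P \<rightarrow>\<^sub>M MM" "T \<in> borel_measurable P"
  shows "\<exists>k. cond_distr P MM borel W T k"
proof -
  interpret real_disintegration P MM W T using assms by (rule real_disintegration.intro)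
  show ?thesis using cond_distr_cond_kernel by blast
qed

section \<open>Adequacy of invariant sufficient representations\<close>

lemma distr_distr_retract:
  assumes i: "i \<in> X \<rightarrow>\<^sub>M Y" and r: "r \<in> Y \<rightarrow>\<^sub>M X" and ri: "\<And>x. x \<in> space X \<Longrightarrow> r (i x) = x"
    and sets_\<mu>: "sets \<mu> = sets X"
  shows "distr (distr \<mu> Y i) X r = \<mu>"
proof -
  have "distr (distr \<mu> Y i) X r = distr \<mu> X (r \<circ> i)"
    using i r by (intro distr_distr) (simp_all add: measurable_cong_sets[OF sets_\<mu> refl])
  also have "\<dots> = distr \<mu> X (\<lambda>x. x)"
    using ri sets_eq_imp_space_eq[OF sets_\<mu>] by (intro distr_cong) auto
  also have "\<dots> = \<mu>" using sets_\<mu> by (intro distr_id2) simp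
  finally show ?thesis .
qed

lemma cond_distr_retract_exists:
  assumes P: "prob_space P" and W: "W \<in> P \<rightarrow>\<^sub>M MM" and Z: "Z \<in> P \<rightarrow>\<^sub>M X"
    and retract: "measurable_retract X (borel :: real measure)"
  shows "\<exists>k. cond_distr P MM X W Z k"
proof -
  obtain i :: "_ \<Rightarrow> real" and r where ir: "i \<in> X \<rightarrow>\<^sub>M borel" "r \<in> borel \<rightarrow>\<^sub>M X"
      "\<And>x. x \<in> space X \<Longrightarrow> r (i x) = x"
    using retract unfolding measurable_retract_def by blast
  have "(\<lambda>\<omega>. i (Z \<omega>)) \<in> borel_measurable P" using ir(1) Z by measurable
  then obtain k where k: "cond_distr P MM borel W (\<lambda>\<omega>. i (Z \<omega>)) k"
    using cond_distr_real_exists[OF P W] by blast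
  then have k_meas: "k \<in> MM \<rightarrow>\<^sub>M prob_algebra borel" unfolding cond_distr_def by blast
  have "emeasure P {\<omega> \<in> space P. W \<omega> \<in> A \<and> Z \<omega> \<in> B}
      = (\<integral>\<^sup>+ m. indicator A m * emeasure (distr (k m) X r) B \<partial>distr P MM W)"
    if A: "A \<in> sets MM" and B: "B \<in> sets X" for A B
  proof -
    have rB: "r -` B \<inter> space borel \<in> sets borel" using measurable_sets[OF ir(2) B] .
    have "{\<omega> \<in> space P. W \<omega> \<in> A \<and> Z \<omega> \<in> B} = {\<omega> \<in> space P. W \<omega> \<in> A \<and> i (Z \<omega>) \<in> r -` B \<inter> space borel}"
      using measurable_space[OF Z] ir(3) by auto
    then have "emeasure P {\<omega> \<in> space P. W \<omega> \<in> A \<and> Z \<omega> \<in> B}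
        = emeasure P {\<omega> \<in> space P. W \<omega> \<in> A \<and> i (Z \<omega>) \<in> r -` B \<inter> space borel}"
      by simp
    also have "\<dots> = (\<integral>\<^sup>+ m. indicator A m * emeasure (k m) (r -` B \<inter> space borel) \<partial>distr P MM W)"
      using k A rB unfolding cond_distr_def by blast
    also have "\<dots> = (\<integral>\<^sup>+ m. indicator A m * emeasure (distr (k m) X r) B \<partial>distr P MM W)"
    proof (intro nn_integral_cong)
      fix m assume "m \<in> space (distr P MM W)"
      then have sets_k: "sets (k m) = sets borel"
        using measurable_space[OF k_meas] by (simp add: space_prob_algebra)
      then have "r \<in> k m \<rightarrow>\<^sub>M X" using ir(2) measurable_cong_sets[of "k m" borel X X] by simp
      then have "emeasure (distr (k m) X r) B = emeasure (k m) (r -` B \<inter> space (k m))"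
        using B by (rule emeasure_distr)
      then show "indicator A m * emeasure (k m) (r -` B \<inter> space borel)
          = indicator A m * emeasure (distr (k m) X r) B"
        using sets_eq_imp_space_eq[OF sets_k] by simp
    qed
    finally show ?thesis .
  qed
  moreover have "(\<lambda>m. distr (k m) X r) \<in> MM \<rightarrow>\<^sub>M prob_algebra X"
    using measurable_compose[OF k_meas measurable_distr_prob_space[OF ir(2)]] by (simp add: comp_def)
  ultimately show ?thesis unfolding cond_distr_def by (intro exI[of _ "\<lambda>m. distr (k m) X r"]) simp
qed

lemma distr_kernel_real:
  assumes \<kappa>: "\<kappa> \<in> X \<rightarrow>\<^sub>M prob_algebra MY" and i: "i \<in> MY \<rightarrow>\<^sub>M borel"
  shows measurable_cdf_distr_kernel: "(\<lambda>x. cdf (distr (\<kappa> x) borel i) t) \<in> borel_measurable X"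
    and real_distribution_distr_kernel: "x \<in> space X \<Longrightarrow> real_distribution (distr (\<kappa> x) borel i)"
proof -
  have sets_\<kappa>: "sets (\<kappa> x) = sets MY" and prob_\<kappa>: "prob_space (\<kappa> x)" if "x \<in> space X" for x
    using measurable_space[OF \<kappa> that] by (auto simp: space_prob_algebra)
  have i_\<kappa>: "i \<in> \<kappa> x \<rightarrow>\<^sub>M borel" if "x \<in> space X" for x
    using measurable_cong_sets[OF sets_\<kappa>[OF that] refl, of borel] i by blast
  show "real_distribution (distr (\<kappa> x) borel i)" if "x \<in> space X"
    unfolding real_distribution_def real_distribution_axioms_def
    using prob_space.prob_space_distr[OF prob_\<kappa>[OF that] i_\<kappa>[OF that]] by simp
  have "(\<lambda>x. emeasure (\<kappa> x) (i -` {..t} \<inter> space MY)) \<in> borel_measurable X"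
    using measurable_compose[OF measurable_prob_algebraD[OF \<kappa>] measurable_emeasure_subprob_algebra]
      measurable_sets[OF i] by (simp add: comp_def)
  then have "(\<lambda>x. measure (\<kappa> x) (i -` {..t} \<inter> space MY)) \<in> borel_measurable X"
    unfolding measure_def by measurable
  moreover have "cdf (distr (\<kappa> x) borel i) t = measure (\<kappa> x) (i -` {..t} \<inter> space MY)"
    if "x \<in> space X" for x
    unfolding cdf_def using i_\<kappa>[OF that] sets_eq_imp_space_eq[OF sets_\<kappa>[OF that]] by (simp add: measure_distr)
  ultimately show "(\<lambda>x. cdf (distr (\<kappa> x) borel i) t) \<in> borel_measurable X"
    using measurable_cong[where f = "\<lambda>x. cdf (distr (\<kappa> x) borel i) t"
        and g = "\<lambda>x. measure (\<kappa> x) (i -` {..t} \<inter> space MY)"] by simp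
qed

text \<open>The distribution functions of the kernel, taken at the rationals, factor through \<open>M\<close> one
  by one, and the kernel is rebuilt from them.\<close>

lemma kernel_factor_through:
  assumes rX: "measurable_retract X (borel :: real measure)"
    and rM: "measurable_retract MM (borel :: real measure)"
    and rY: "measurable_retract MY (borel :: real measure)"
    and M: "M \<in> X \<rightarrow>\<^sub>M MM" and \<kappa>: "\<kappa> \<in> X \<rightarrow>\<^sub>M prob_algebra MY"
    and const: "\<And>x y. x \<in> space X \<Longrightarrow> y \<in> space X \<Longrightarrow> M x = M y \<Longrightarrow> \<kappa> x = \<kappa> y"
  shows "\<exists>q \<in> MM \<rightarrow>\<^sub>M prob_algebra MY. \<forall>x\<in>space X. \<kappa> x = q (M x)"
proof -
  obtain i :: "_ \<Rightarrow> real" and r where ir: "i \<in> MY \<rightarrow>\<^sub>M borel" "r \<in> borel \<rightarrow>\<^sub>M MY"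
      "\<And>y. y \<in> space MY \<Longrightarrow> r (i y) = y"
    using rY unfolding measurable_retract_def by blast
  define F where "F x = distr (\<kappa> x) borel i" for x
  have "\<exists>h. h \<in> borel_measurable MM \<and> (\<forall>x\<in>space X. cdf (F x) (of_rat c) = h (M x))" for c
  proof -
    have "\<exists>h\<in>borel_measurable MM. \<forall>x\<in>space X. cdf (F x) (of_rat c) = h (M x)"
    proof (rule measurable_factor_through[OF rX rM M])
      show "(\<lambda>x. cdf (F x) (of_rat c)) \<in> borel_measurable X"
        unfolding F_def by (rule measurable_cdf_distr_kernel[OF \<kappa> ir(1)])
      fix x y assume "x \<in> space X" "y \<in> space X" "M x = M y"
      then have "\<kappa> x = \<kappa> y" by (rule const)
      then show "cdf (F x) (of_rat c) = cdf (F y) (of_rat c)" by (simp add: F_def)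
    qed
    then show ?thesis by blast
  qed
  define H where "H c = (SOME h. h \<in> borel_measurable MM \<and> (\<forall>x\<in>space X. cdf (F x) (of_rat c) = h (M x)))"
    for c
  have H: "H c \<in> borel_measurable MM" "\<And>x. x \<in> space X \<Longrightarrow> cdf (F x) (of_rat c) = H c (M x)" for c
    using someI_ex[OF \<open>\<exists>h. _\<close>[of c]] unfolding H_def by auto
  define q where "q m = distr (family_kernel H m) MY r" for m
  have "q \<in> MM \<rightarrow>\<^sub>M prob_algebra MY"
    unfolding q_def
    using measurable_compose[OF measurable_family_kernel[OF H(1)] measurable_distr_prob_space[OF ir(2)]]
    by (simp add: comp_def)
  moreover have "\<kappa> x = q (M x)" if x: "x \<in> space X" for x
  proof -
    have "family_kernel H (M x) = F x"
      using H(2)[OF x] real_distribution_distr_kernel[OF \<kappa> ir(1) x]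
      by (intro family_kernel_cdf) (simp_all add: F_def)
    moreover have "sets (\<kappa> x) = sets MY" using measurable_space[OF \<kappa> x] by (simp add: space_prob_algebra)
    ultimately show ?thesis unfolding q_def F_def using distr_distr_retract[OF ir] by simp
  qed
  ultimately show ?thesis by blast
qed

lemma cond_distr_comp_factor:
  assumes cond: "cond_distr P X MY Z Y \<kappa>" and Z: "Z \<in> P \<rightarrow>\<^sub>M X" and M: "M \<in> X \<rightarrow>\<^sub>M MM"
    and q: "q \<in> MM \<rightarrow>\<^sub>M prob_algebra MY" and factor: "\<And>x. x \<in> space X \<Longrightarrow> \<kappa> x = q (M x)"
  shows "cond_distr P MM MY (\<lambda>\<omega>. M (Z \<omega>)) Y q"
  unfolding cond_distr_def
proof (intro conjI q ballI)
  fix A B assume A: "A \<in> sets MM" and B: "B \<in> sets MY"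
  have MA: "M -` A \<inter> space X \<in> sets X" using measurable_sets[OF M A] .
  have "{\<omega> \<in> space P. M (Z \<omega>) \<in> A \<and> Y \<omega> \<in> B} = {\<omega> \<in> space P. Z \<omega> \<in> M -` A \<inter> space X \<and> Y \<omega> \<in> B}"
    using measurable_space[OF Z] by auto
  then have "emeasure P {\<omega> \<in> space P. M (Z \<omega>) \<in> A \<and> Y \<omega> \<in> B}
      = emeasure P {\<omega> \<in> space P. Z \<omega> \<in> M -` A \<inter> space X \<and> Y \<omega> \<in> B}"
    by simp
  also have "\<dots> = (\<integral>\<^sup>+ x. indicator (M -` A \<inter> space X) x * emeasure (\<kappa> x) B \<partial>distr P X Z)"
    using cond MA B unfolding cond_distr_def by blast
  also have "\<dots> = (\<integral>\<^sup>+ x. indicator A (M x) * emeasure (q (M x)) B \<partial>distr P X Z)"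
    by (intro nn_integral_cong) (simp add: factor split: split_indicator)
  also have "\<dots> = (\<integral>\<^sup>+ m. indicator A m * emeasure (q m) B \<partial>distr (distr P X Z) MM M)"
    using A measurable_compose[OF measurable_prob_algebraD[OF q] measurable_emeasure_subprob_algebra[OF B]]
    by (intro nn_integral_distr[symmetric]) (auto simp: comp_def M)
  also have "distr (distr P X Z) MM M = distr P MM (\<lambda>\<omega>. M (Z \<omega>))"
    using distr_distr[OF M Z] by (simp add: comp_def)
  finally show "emeasure P {\<omega> \<in> space P. M (Z \<omega>) \<in> A \<and> Y \<omega> \<in> B}
      = (\<integral>\<^sup>+ m. indicator A m * emeasure (q m) B \<partial>distr P MM (\<lambda>\<omega>. M (Z \<omega>)))" .
qed

lemma invariant_kernel_constant_on_fibres: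
  assumes "invariant_sufficient_rep G X MM \<phi> M" and "G_invariant_kernel G X \<phi> \<kappa>"
    and "x \<in> space X" "y \<in> space X" "M x = M y"
  shows "\<kappa> x = \<kappa> y"
proof -
  obtain g where "g \<in> carrier G" "y = \<phi> g x"
    using assms(1,3-5) unfolding invariant_sufficient_rep_def by blast
  then show ?thesis using assms(2,3) unfolding G_invariant_kernel_def by blast
qed

lemma standard_borel_measurable_retract_real_of_measurable:
  assumes "prob_space P" "standard_borel X" "f \<in> P \<rightarrow>\<^sub>M X"
  shows "measurable_retract X (borel :: real measure)"
proof -
  obtain \<omega> where "\<omega> \<in> space P" using prob_space.not_empty[OF assms(1)] by blast
  then have "space X \<noteq> {}" using measurable_space[OF assms(3)] by blast
  then show ?thesis using standard_borel_measurable_retract_real[OF assms(2)] by blast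
qed

theorem corollary3p6:
  fixes P :: "'a measure"
    and MS :: "'s measure" and MV :: "'v measure" and MY :: "'y measure" and MM :: "'m measure"
    and G :: "('g, 'b) monoid_scheme" and TG :: "'g topology"
    and \<phi> :: "'g \<Rightarrow> ('s \<times> 'v) \<Rightarrow> ('s \<times> 'v)"
    and S :: "'a \<Rightarrow> 's" and V :: "'a \<Rightarrow> 'v" and Y :: "'a \<Rightarrow> 'y"
    and \<kappa> :: "('s \<times> 'v) \<Rightarrow> 'y measure"
    and M :: "('s \<times> 'v) \<Rightarrow> 'm"
  assumes "prob_space P"
    and "standard_borel MS" and "standard_borel MV" and "standard_borel MY"
    and "standard_borel MM"
    and "compact_topological_group G TG"
    and "measurable_group_action G TG (MS \<Otimes>\<^sub>M MV) \<phi>"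
    and "S \<in> measurable P MS" and "V \<in> measurable P MV" and "Y \<in> measurable P MY"
    and "cond_distr P (MS \<Otimes>\<^sub>M MV) MY (\<lambda>\<omega>. (S \<omega>, V \<omega>)) Y \<kappa>"
    and "G_invariant_kernel G (MS \<Otimes>\<^sub>M MV) \<phi> \<kappa>"
    and "invariant_sufficient_rep G (MS \<Otimes>\<^sub>M MV) MM \<phi> M"
  shows "adequate_statistic P (MS \<Otimes>\<^sub>M MV) MY MM (\<lambda>\<omega>. (S \<omega>, V \<omega>)) Y \<kappa> M"
proof -
  let ?X = "MS \<Otimes>\<^sub>M MV" and ?Z = "\<lambda>\<omega>. (S \<omega>, V \<omega>)"
  have Z: "?Z \<in> P \<rightarrow>\<^sub>M ?X" using assms(8,9) by measurable
  have M: "M \<in> ?X \<rightarrow>\<^sub>M MM" using assms(13) unfolding invariant_sufficient_rep_def by blast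
  have MZ: "(\<lambda>\<omega>. M (?Z \<omega>)) \<in> P \<rightarrow>\<^sub>M MM" using M Z by measurable
  note retract = standard_borel_measurable_retract_real_of_measurable[OF assms(1)]
  have rX: "measurable_retract ?X (borel :: real measure)"
    using measurable_retract_trans[OF measurable_retract_pair[OF retract[OF assms(2,8)]
        retract[OF assms(3,9)]] measurable_retract_pair_real] .
  have "\<exists>k. cond_distr P MM ?X (\<lambda>\<omega>. M (?Z \<omega>)) ?Z k"
    by (rule cond_distr_retract_exists[OF assms(1) MZ Z rX])
  then have sufficient: "sufficient_statistic P ?X MM ?Z M" unfolding sufficient_statistic_def using M by blast
  have \<kappa>: "\<kappa> \<in> ?X \<rightarrow>\<^sub>M prob_algebra MY" using assms(11) unfolding cond_distr_def by blast
  have fibres: "\<kappa> x = \<kappa> y" if "x \<in> space ?X" "y \<in> space ?X" "M x = M y" for x y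
    using invariant_kernel_constant_on_fibres[OF assms(13,12) that] .
  obtain q where q: "q \<in> MM \<rightarrow>\<^sub>M prob_algebra MY" "\<And>x. x \<in> space ?X \<Longrightarrow> \<kappa> x = q (M x)"
    using kernel_factor_through[OF rX retract[OF assms(5) MZ] retract[OF assms(4,10)] M \<kappa> fibres] by blast
  then have "cond_distr P MM MY (\<lambda>\<omega>. M (?Z \<omega>)) Y q" by (intro cond_distr_comp_factor[OF assms(11) Z M])
  then show ?thesis unfolding adequate_statistic_def using sufficient q(2) by blast
qed

end
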